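(* Let $\mathbb{X}$ be a Cartesian $k$-differential abstract Kleisli category with differential combinator $\mathsf{D}$ and abstract Kleisli structure $(\mathsf{S},\epsilon,\vartheta)$. Then the monad $\mathbb{S}=(\mathsf{S},\delta,\vartheta)$ on $\vartheta\text{-}\mathsf{nat}[\mathbb{X}]$, where $\delta_A=\mathsf{S}(\epsilon_A)$, is a Cartesian $k$-differential monad on the Cartesian $k$-differential category $\vartheta\text{-}\mathsf{nat}[\mathbb{X}]$ (with structure inherited from $\mathbb{X}$). Furthermore, the isomorphism of categories $\mathsf{G}_\vartheta:\mathbb{X}\to\mathsf{KL}(\mathbb{S})$, identity on objects and given on $f:A\to B$ by $\llbracket\mathsf{G}_\vartheta(f)\rrbracket=\mathsf{S}(f)\circ\vartheta_A$ (with inverse $\mathsf{G}^{-1}_\vartheta(\llbracket f\rrbracket)=\epsilon_B\circ\llbracket f\rrbracket$), is a strict Cartesian $k$-differential functor, as is its inverse, where $\mathsf{KL}(\mathbb{S})$ carries the Cartesian $k$-differential structure lifted from $\vartheta\text{-}\mathsf{nat}[\mathbb{X}]$ (products of objects as in the base, $\llbracket\pi_j\rrbracket=\vartheta_{A_j}\circ\pi_j$, $\llbracket\langle f_1,\dots,f_n\rangle\rrbracket=\omega^{-1}\circ\langle\llbracket f_1\rrbracket,\dots,\llbracket f_n\rrbracket\rangle$, $k$-module structure inherited, and $\llbracket\mathsf{D}_\mathbb{S}[f]\rrbracket=\mathsf{D}[\llbracket f\rrbracket]$). Hence $\mathbb{X}\cong\mathsf{KL}(\mathbb{S})$ as Cartesian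 $k$-differential categories.
   Context: Fix a commutative semiring $k$. A left $k$-linear category is a category $\mathbb{X}$ in which each hom-set $\mathbb{X}(A,B)$ is a $k$-module (scalar multiplication $r\cdot f$, addition $+$, zero $0$) such that precomposition is $k$-linear: $(r\cdot f+s\cdot g)\circ x=r\cdot(f\circ x)+s\cdot(g\circ x)$. A map $f$ is $k$-linear if $f\circ(r\cdot x+s\cdot y)=r\cdot(f\circ x)+s\cdot(f\circ y)$ for all suitable $x,y$ and $r,s\in k$. A Cartesian left $k$-linear category is a left $k$-linear category with finite products (terminal object $\ast$, projections $\pi_j:A_1\times\cdots\times A_n\to A_j$, pairing $\langle-,\dots,-\rangle$) in which all projections are $k$-linear. A Cartesian $k$-differential category is a Cartesian left $k$-linear category equipped with a differential combinator $\mathsf{D}$ assigning to each $f:A\to B$ a map $\mathsf{D}[f]:A\times A\to B$ such that: [CD.1] $\mathsf{D}[r\cdot f+s\cdot g]=r\cdot\mathsf{D}[f]+s\cdot\mathsf{D}[g]$; [CD.2] $\mathsf{D}[f]\circ\langle\pi_1,r\cdot\pi_2+s\cdot\pi_3\rangle=r\cdot(\mathsf{D}[f]\circ\langle\pi_1,\pi_2\rangle)+s\cdot(\mathsf{D}[f]\circ\langle\pi_1,\pi_3\rangle)$ (as maps $A\times A\times A\to B$); [CD.3] $\mathsf{D}[1_A]=\pi_2$ and, for $\pi_j:A_1\times\cdots\times A_n\to A_j$, $\mathsf{D}[\pi_j]=\pi_{n+j}$; [CD.4] $\mathsf{D}[\langle f_1,\dots,f_n\rangle]=\langle\mathsf{D}[f_1],\dots,\mathsf{D}[f_n]\rangle$;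 [CD.5] $\mathsf{D}[g\circ f]=\mathsf{D}[g]\circ\langle f\circ\pi_1,\mathsf{D}[f]\rangle$; [CD.6] $\mathsf{D}[\mathsf{D}[f]]\circ\langle\pi_1,0,0,\pi_2\rangle=\mathsf{D}[f]$; [CD.7] $\mathsf{D}[\mathsf{D}[f]]\circ\langle\pi_1,\pi_2,\pi_3,\pi_4\rangle=\mathsf{D}[\mathsf{D}[f]]\circ\langle\pi_1,\pi_3,\pi_2,\pi_4\rangle$ (identifying $(A\times A)\times(A\times A)$ with $A\times A\times A\times A$). A map $f$ is $\mathsf{D}$-linear if $\mathsf{D}[f]=f\circ\pi_2$. For Cartesian left $k$-linear categories $\mathbb{X},\mathbb{Y}$, a strong Cartesian $k$-linear functor is a functor $\mathsf{F}:\mathbb{X}\to\mathbb{Y}$ such that $\mathsf{F}(\ast)\to\ast$ is an isomorphism, the canonical maps $\omega_{A_1,\dots,A_n}=\langle\mathsf{F}(\pi_1),\dots,\mathsf{F}(\pi_n)\rangle:\mathsf{F}(A_1\times\cdots\times A_n)\to\mathsf{F}(A_1)\times\cdots\times\mathsf{F}(A_n)$ are isomorphisms, and $\mathsf{F}(r\cdot f+s\cdot g)=r\cdot\mathsf{F}(f)+s\cdot\mathsf{F}(g)$. It is strict if moreover $\omega$ is the identity. For Cartesian $k$-differential categories, a strong Cartesian $k$-differential functor is a strong Cartesian $k$-linear functor with $\mathsf{D}[\mathsf{F}(f)]=\mathsf{F}(\mathsf{D}[f])\circ\omega^{-1}_{A,A}$ for all $f:A\to B$; a strict Cartesian $k$-differential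 functor is a strict Cartesian $k$-linear functor with $\mathsf{D}[\mathsf{F}(f)]=\mathsf{F}(\mathsf{D}[f])$. A Cartesian $k$-differential monad on a Cartesian $k$-differential category $\mathbb{X}$ is a monad $\mathbb{S}=(\mathsf{S},\mu,\eta)$ on $\mathbb{X}$ such that $\mathsf{S}$ is a strong Cartesian $k$-differential functor and every $\eta_A$ and $\mu_A$ is $\mathsf{D}$-linear. Kleisli category notation: $\mathsf{KL}(\mathbb{S})$ has the objects of the base and a map $f:A\to B$ is a base map $\llbracket f\rrbracket:A\to\mathsf{S}(B)$; identities $\llbracket 1_A\rrbracket=\eta_A$, composition $\llbracket g\circ f\rrbracket=\mu_C\circ\mathsf{S}(\llbracket g\rrbracket)\circ\llbracket f\rrbracket$. An abstract Kleisli structure on a category $\mathbb{X}$ is a triple $(\mathsf{S},\epsilon,\vartheta)$ of an endofunctor $\mathsf{S}$, a natural transformation $\epsilon_A:\mathsf{S}(A)\to A$, and a family of maps $\vartheta_A:A\to\mathsf{S}(A)$ (not necessarily natural) such that $\vartheta_{\mathsf{S}(A)}$ is natural in $A$ and $\epsilon_A\circ\vartheta_A=1_A$, $\epsilon_{\mathsf{S}(A)}\circ\mathsf{S}(\vartheta_A)=1_{\mathsf{S}(A)}$, $\vartheta_{\mathsf{S}(A)}\circ\vartheta_A=\mathsf{S}(\vartheta_A)\circ\vartheta_A$. A map $f:A\to B$ is $\vartheta$-natural if $\vartheta_B\circ f=\mathsf{S}(f)\circ\vartheta_A$; $\vartheta\text{-}\mathsf{nat}[\mathbb{X}]$ denotes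 the subcategory of $\vartheta$-natural maps. It is known (Führmann) that $\mathsf{S}$ restricts to an endofunctor of $\vartheta\text{-}\mathsf{nat}[\mathbb{X}]$, that $(\mathsf{S},\delta,\vartheta)$ with $\delta_A=\mathsf{S}(\epsilon_A)$ is a monad on $\vartheta\text{-}\mathsf{nat}[\mathbb{X}]$, and that $\mathsf{G}_\vartheta$ as in the claim is an isomorphism of categories. A Cartesian $k$-differential abstract Kleisli category is a Cartesian $k$-differential category $\mathbb{X}$ with an abstract Kleisli structure $(\mathsf{S},\epsilon,\vartheta)$ such that all projections are $\vartheta$-natural, $\mathsf{S}$ is a strong Cartesian $k$-differential functor, and every $\epsilon_A$ and $\vartheta_A$ is $\mathsf{D}$-linear. In this situation $\vartheta\text{-}\mathsf{nat}[\mathbb{X}]$ is a sub-Cartesian $k$-differential category of $\mathbb{X}$. *)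

theory Defs
  imports Main
begin

section \<open>Categories (arrows of a single type, relativised to hom-sets)\<close>

record ('o,'a) cat =
  obj :: "'o set"
  arr :: "'a set"
  dm  :: "'a \<Rightarrow> 'o"
  cd  :: "'a \<Rightarrow> 'o"
  ident :: "'o \<Rightarrow> 'a"
  cmp :: "'a \<Rightarrow> 'a \<Rightarrow> 'a"   (* cmp C g f = g o f *)

text \<open>Finite products are given by a chosen terminal object and chosen binary products
  (n-ary products are the iterated binary ones).\<close>

record ('o,'a,'k) cdc = "('o,'a) cat" +
  smul :: "'k \<Rightarrow> 'a \<Rightarrow> 'a"
  pls  :: "'a \<Rightarrow> 'a \<Rightarrow> 'a"
  zr   :: "'o \<Rightarrow> 'o \<Rightarrow> 'a"
  trm  :: "'o"
  bng  :: "'o \<Rightarrow> 'a"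
  prd  :: "'o \<Rightarrow> 'o \<Rightarrow> 'o"
  p1   :: "'o \<Rightarrow> 'o \<Rightarrow> 'a"
  p2   :: "'o \<Rightarrow> 'o \<Rightarrow> 'a"
  tup  :: "'a \<Rightarrow> 'a \<Rightarrow> 'a"
  Dif  :: "'a \<Rightarrow> 'a"

definition hom :: "('o,'a,'m) cat_scheme \<Rightarrow> 'o \<Rightarrow> 'o \<Rightarrow> 'a set" where
  "hom C A B = {f \<in> arr C. dm C f = A \<and> cd C f = B}"

definition category :: "('o,'a,'m) cat_scheme \<Rightarrow> bool" where
  "category C \<longleftrightarrow>
     (\<forall>f \<in> arr C. dm C f \<in> obj C \<and> cd C f \<in> obj C) \<and>
     (\<forall>A \<in> obj C. ident C A \<in> hom C A A) \<and>
     (\<forall>A B D f g. f \<in> hom C A B \<longrightarrow> g \<in> hom C B D \<longrightarrow> cmp C g f \<in> hom C A D) \<and>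
     (\<forall>A B f. f \<in> hom C A B \<longrightarrow> cmp C (ident C B) f = f \<and> cmp C f (ident C A) = f) \<and>
     (\<forall>A B D E f g h. f \<in> hom C A B \<longrightarrow> g \<in> hom C B D \<longrightarrow> h \<in> hom C D E \<longrightarrow>
        cmp C h (cmp C g f) = cmp C (cmp C h g) f)"

definition left_klinear :: "('o,'a,'k::comm_semiring_1,'m) cdc_scheme \<Rightarrow> bool" where
  "left_klinear C \<longleftrightarrow> category C \<and>
     (\<forall>A B. A \<in> obj C \<longrightarrow> B \<in> obj C \<longrightarrow>
        zr C A B \<in> hom C A B \<and>
        (\<forall>f \<in> hom C A B. \<forall>g \<in> hom C A B. \<forall>h \<in> hom C A B. \<forall>r s.
           pls C f g \<in> hom C A B \<and> smul C r f \<in> hom C A B \<and>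
           pls C (pls C f g) h = pls C f (pls C g h) \<and>
           pls C f g = pls C g f \<and>
           pls C f (zr C A B) = f \<and>
           smul C r (pls C f g) = pls C (smul C r f) (smul C r g) \<and>
           smul C (r + s) f = pls C (smul C r f) (smul C s f) \<and>
           smul C (r * s) f = smul C r (smul C s f) \<and>
           smul C 1 f = f \<and>
           smul C 0 f = zr C A B \<and>
           smul C r (zr C A B) = zr C A B)) \<and>
     (\<forall>A B D f g x r s. f \<in> hom C B D \<longrightarrow> g \<in> hom C B D \<longrightarrow> x \<in> hom C A B \<longrightarrow>
        cmp C (pls C (smul C r f) (smul C s g)) x = pls C (smul C r (cmp C f x)) (smul C s (cmp C g x)))"

definition klinear_map :: "('o,'a,'k::comm_semiring_1,'m) cdc_scheme \<Rightarrow> 'a \<Rightarrow> bool" where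
  "klinear_map C f \<longleftrightarrow> (\<forall>A x y r s. x \<in> hom C A (dm C f) \<longrightarrow> y \<in> hom C A (dm C f) \<longrightarrow>
      cmp C f (pls C (smul C r x) (smul C s y)) = pls C (smul C r (cmp C f x)) (smul C s (cmp C f y)))"

definition has_products :: "('o,'a,'k,'m) cdc_scheme \<Rightarrow> bool" where
  "has_products C \<longleftrightarrow>
     trm C \<in> obj C \<and>
     (\<forall>A \<in> obj C. bng C A \<in> hom C A (trm C) \<and> (\<forall>f \<in> hom C A (trm C). f = bng C A)) \<and>
     (\<forall>A \<in> obj C. \<forall>B \<in> obj C.
        prd C A B \<in> obj C \<and> p1 C A B \<in> hom C (prd C A B) A \<and> p2 C A B \<in> hom C (prd C A B) B \<and>
        (\<forall>D f g. f \<in> hom C D A \<longrightarrow> g \<in> hom C D B \<longrightarrow>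
           tup C f g \<in> hom C D (prd C A B) \<and>
           cmp C (p1 C A B) (tup C f g) = f \<and> cmp C (p2 C A B) (tup C f g) = g) \<and>
        (\<forall>D h. h \<in> hom C D (prd C A B) \<longrightarrow>
           tup C (cmp C (p1 C A B) h) (cmp C (p2 C A B) h) = h))"

definition cart_left_klinear :: "('o,'a,'k::comm_semiring_1,'m) cdc_scheme \<Rightarrow> bool" where
  "cart_left_klinear C \<longleftrightarrow> left_klinear C \<and> has_products C \<and>
     (\<forall>A \<in> obj C. \<forall>B \<in> obj C. klinear_map C (p1 C A B) \<and> klinear_map C (p2 C A B))"

definition cart_diff_cat :: "('o,'a,'k::comm_semiring_1,'m) cdc_scheme \<Rightarrow> bool" where
  "cart_diff_cat C \<longleftrightarrow> cart_left_klinear C \<and>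
   (\<forall>A \<in> obj C. \<forall>B \<in> obj C.
     (\<forall>f \<in> hom C A B. Dif C f \<in> hom C (prd C A A) B) \<and>
     \<comment> \<open>CD.1\<close>
     (\<forall>f \<in> hom C A B. \<forall>g \<in> hom C A B. \<forall>r s.
        Dif C (pls C (smul C r f) (smul C s g)) = pls C (smul C r (Dif C f)) (smul C s (Dif C g))) \<and>
     \<comment> \<open>CD.2, maps A x (A x A) \<rightarrow> B\<close>
     (\<forall>f \<in> hom C A B. \<forall>r s.
        (let AA = prd C A A; T = prd C A AA;
             q1 = p1 C A AA; q2 = cmp C (p1 C A A) (p2 C A AA); q3 = cmp C (p2 C A A) (p2 C A AA)
         in cmp C (Dif C f) (tup C q1 (pls C (smul C r q2) (smul C s q3)))
            = pls C (smul C r (cmp C (Dif C f) (tup C q1 q2))) (smul C s (cmp C (Dif C f) (tup C q1 q3))))) \<and>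
     \<comment> \<open>CD.3\<close>
     Dif C (ident C A) = p2 C A A \<and>
     Dif C (p1 C A B) = cmp C (p1 C A B) (p2 C (prd C A B) (prd C A B)) \<and>
     Dif C (p2 C A B) = cmp C (p2 C A B) (p2 C (prd C A B) (prd C A B)) \<and>
     \<comment> \<open>CD.4 (nullary and binary pairing)\<close>
     Dif C (bng C A) = bng C (prd C A A) \<and>
     (\<forall>D. D \<in> obj C \<longrightarrow> (\<forall>f \<in> hom C A B. \<forall>g \<in> hom C A D.
        Dif C (tup C f g) = tup C (Dif C f) (Dif C g))) \<and>
     \<comment> \<open>CD.5\<close>
     (\<forall>D. D \<in> obj C \<longrightarrow> (\<forall>f \<in> hom C A B. \<forall>g \<in> hom C B D.
        Dif C (cmp C g f) = cmp C (Dif C g) (tup C (cmp C f (p1 C A A)) (Dif C f)))) \<and>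
     \<comment> \<open>CD.6 and CD.7, maps (A x A) x (A x A) \<rightarrow> B\<close>
     (\<forall>f \<in> hom C A B.
        (let Q = prd C A A in
          cmp C (Dif C (Dif C f))
             (tup C (tup C (p1 C A A) (zr C Q A)) (tup C (zr C Q A) (p2 C A A))) = Dif C f \<and>
          (let x1 = cmp C (p1 C A A) (p1 C Q Q); x2 = cmp C (p2 C A A) (p1 C Q Q);
               x3 = cmp C (p1 C A A) (p2 C Q Q); x4 = cmp C (p2 C A A) (p2 C Q Q) in
           cmp C (Dif C (Dif C f)) (tup C (tup C x1 x2) (tup C x3 x4))
             = cmp C (Dif C (Dif C f)) (tup C (tup C x1 x3) (tup C x2 x4))))))"

definition D_linear :: "('o,'a,'k,'m) cdc_scheme \<Rightarrow> 'a \<Rightarrow> bool" where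
  "D_linear C f \<longleftrightarrow> Dif C f = cmp C f (p2 C (dm C f) (dm C f))"

definition is_functor :: "('o,'a,'m) cat_scheme \<Rightarrow> ('p,'b,'n) cat_scheme \<Rightarrow>
    ('o \<Rightarrow> 'p) \<Rightarrow> ('a \<Rightarrow> 'b) \<Rightarrow> bool" where
  "is_functor C E Fo Fa \<longleftrightarrow> category C \<and> category E \<and>
     (\<forall>A \<in> obj C. Fo A \<in> obj E \<and> Fa (ident C A) = ident E (Fo A)) \<and>
     (\<forall>A B f. f \<in> hom C A B \<longrightarrow> Fa f \<in> hom E (Fo A) (Fo B)) \<and>
     (\<forall>A B D f g. f \<in> hom C A B \<longrightarrow> g \<in> hom C B D \<longrightarrow> Fa (cmp C g f) = cmp E (Fa g) (Fa f))"

definition is_iso :: "('o,'a,'m) cat_scheme \<Rightarrow> 'a \<Rightarrow> 'o \<Rightarrow> 'o \<Rightarrow> bool" where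
  "is_iso C f A B \<longleftrightarrow> f \<in> hom C A B \<and>
     (\<exists>g \<in> hom C B A. cmp C g f = ident C A \<and> cmp C f g = ident C B)"

definition inv_arr :: "('o,'a,'m) cat_scheme \<Rightarrow> 'a \<Rightarrow> 'o \<Rightarrow> 'o \<Rightarrow> 'a" where
  "inv_arr C f A B = (THE g. g \<in> hom C B A \<and> cmp C g f = ident C A \<and> cmp C f g = ident C B)"

definition omegaF :: "('o,'a,'k,'m) cdc_scheme \<Rightarrow> ('p,'b,'l,'n) cdc_scheme \<Rightarrow>
    ('a \<Rightarrow> 'b) \<Rightarrow> 'o \<Rightarrow> 'o \<Rightarrow> 'b" where
  "omegaF C E Fa A B = tup E (Fa (p1 C A B)) (Fa (p2 C A B))"

definition strong_cart_klinear_functor :: "('o,'a,'k::comm_semiring_1,'m) cdc_scheme \<Rightarrow>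
    ('p,'b,'k,'n) cdc_scheme \<Rightarrow> ('o \<Rightarrow> 'p) \<Rightarrow> ('a \<Rightarrow> 'b) \<Rightarrow> bool" where
  "strong_cart_klinear_functor C E Fo Fa \<longleftrightarrow> is_functor C E Fo Fa \<and>
     is_iso E (bng E (Fo (trm C))) (Fo (trm C)) (trm E) \<and>
     (\<forall>A \<in> obj C. \<forall>B \<in> obj C.
        is_iso E (omegaF C E Fa A B) (Fo (prd C A B)) (prd E (Fo A) (Fo B))) \<and>
     (\<forall>A B f g r s. f \<in> hom C A B \<longrightarrow> g \<in> hom C A B \<longrightarrow>
        Fa (pls C (smul C r f) (smul C s g)) = pls E (smul E r (Fa f)) (smul E s (Fa g)))"

definition strict_cart_klinear_functor :: "('o,'a,'k::comm_semiring_1,'m) cdc_scheme \<Rightarrow>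
    ('p,'b,'k,'n) cdc_scheme \<Rightarrow> ('o \<Rightarrow> 'p) \<Rightarrow> ('a \<Rightarrow> 'b) \<Rightarrow> bool" where
  "strict_cart_klinear_functor C E Fo Fa \<longleftrightarrow> strong_cart_klinear_functor C E Fo Fa \<and>
     Fo (trm C) = trm E \<and>
     (\<forall>A \<in> obj C. \<forall>B \<in> obj C. Fo (prd C A B) = prd E (Fo A) (Fo B) \<and>
        omegaF C E Fa A B = ident E (prd E (Fo A) (Fo B)))"

definition strong_cart_diff_functor :: "('o,'a,'k::comm_semiring_1,'m) cdc_scheme \<Rightarrow>
    ('p,'b,'k,'n) cdc_scheme \<Rightarrow> ('o \<Rightarrow> 'p) \<Rightarrow> ('a \<Rightarrow> 'b) \<Rightarrow> bool" where
  "strong_cart_diff_functor C E Fo Fa \<longleftrightarrow> strong_cart_klinear_functor C E Fo Fa \<and>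
     (\<forall>A B f. f \<in> hom C A B \<longrightarrow>
        Dif E (Fa f) = cmp E (Fa (Dif C f))
          (inv_arr E (omegaF C E Fa A A) (Fo (prd C A A)) (prd E (Fo A) (Fo A))))"

definition strict_cart_diff_functor :: "('o,'a,'k::comm_semiring_1,'m) cdc_scheme \<Rightarrow>
    ('p,'b,'k,'n) cdc_scheme \<Rightarrow> ('o \<Rightarrow> 'p) \<Rightarrow> ('a \<Rightarrow> 'b) \<Rightarrow> bool" where
  "strict_cart_diff_functor C E Fo Fa \<longleftrightarrow> strict_cart_klinear_functor C E Fo Fa \<and>
     (\<forall>A B f. f \<in> hom C A B \<longrightarrow> Dif E (Fa f) = Fa (Dif C f))"

definition monad :: "('o,'a,'m) cat_scheme \<Rightarrow> ('o \<Rightarrow> 'o) \<Rightarrow> ('a \<Rightarrow> 'a) \<Rightarrow>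
    ('o \<Rightarrow> 'a) \<Rightarrow> ('o \<Rightarrow> 'a) \<Rightarrow> bool" where
  "monad C So Sa mu eta \<longleftrightarrow> is_functor C C So Sa \<and>
     (\<forall>A \<in> obj C. eta A \<in> hom C A (So A) \<and> mu A \<in> hom C (So (So A)) (So A) \<and>
        cmp C (mu A) (Sa (mu A)) = cmp C (mu A) (mu (So A)) \<and>
        cmp C (mu A) (eta (So A)) = ident C (So A) \<and>
        cmp C (mu A) (Sa (eta A)) = ident C (So A)) \<and>
     (\<forall>A B f. f \<in> hom C A B \<longrightarrow>
        cmp C (eta B) f = cmp C (Sa f) (eta A) \<and>
        cmp C (mu B) (Sa (Sa f)) = cmp C (Sa f) (mu A))"

definition cart_diff_monad :: "('o,'a,'k::comm_semiring_1,'m) cdc_scheme \<Rightarrow> ('o \<Rightarrow> 'o) \<Rightarrow>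
    ('a \<Rightarrow> 'a) \<Rightarrow> ('o \<Rightarrow> 'a) \<Rightarrow> ('o \<Rightarrow> 'a) \<Rightarrow> bool" where
  "cart_diff_monad C So Sa mu eta \<longleftrightarrow> cart_diff_cat C \<and> monad C So Sa mu eta \<and>
     strong_cart_diff_functor C C So Sa \<and>
     (\<forall>A \<in> obj C. D_linear C (eta A) \<and> D_linear C (mu A))"

definition abstract_kleisli :: "('o,'a,'m) cat_scheme \<Rightarrow> ('o \<Rightarrow> 'o) \<Rightarrow> ('a \<Rightarrow> 'a) \<Rightarrow>
    ('o \<Rightarrow> 'a) \<Rightarrow> ('o \<Rightarrow> 'a) \<Rightarrow> bool" where
  "abstract_kleisli C So Sa eps th \<longleftrightarrow> is_functor C C So Sa \<and>
     (\<forall>A \<in> obj C. eps A \<in> hom C (So A) A \<and> th A \<in> hom C A (So A) \<and>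
        cmp C (eps A) (th A) = ident C A \<and>
        cmp C (eps (So A)) (Sa (th A)) = ident C (So A) \<and>
        cmp C (th (So A)) (th A) = cmp C (Sa (th A)) (th A)) \<and>
     (\<forall>A B f. f \<in> hom C A B \<longrightarrow>
        cmp C f (eps A) = cmp C (eps B) (Sa f) \<and>
        cmp C (th (So B)) (Sa f) = cmp C (Sa (Sa f)) (th (So A)))"

definition theta_natural :: "('o,'a,'m) cat_scheme \<Rightarrow> ('a \<Rightarrow> 'a) \<Rightarrow> ('o \<Rightarrow> 'a) \<Rightarrow> 'a \<Rightarrow> bool" where
  "theta_natural C Sa th f \<longleftrightarrow>
     cmp C (th (cd C f)) f = cmp C (Sa f) (th (dm C f))"

definition theta_nat :: "('o,'a,'k,'m) cdc_scheme \<Rightarrow> ('a \<Rightarrow> 'a) \<Rightarrow> ('o \<Rightarrow> 'a) \<Rightarrow>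
    ('o,'a,'k,'m) cdc_scheme" where
  "theta_nat C Sa th = C\<lparr>arr := {f \<in> arr C. theta_natural C Sa th f}\<rparr>"

definition cart_diff_abstract_kleisli :: "('o,'a,'k::comm_semiring_1,'m) cdc_scheme \<Rightarrow>
    ('o \<Rightarrow> 'o) \<Rightarrow> ('a \<Rightarrow> 'a) \<Rightarrow> ('o \<Rightarrow> 'a) \<Rightarrow> ('o \<Rightarrow> 'a) \<Rightarrow> bool" where
  "cart_diff_abstract_kleisli C So Sa eps th \<longleftrightarrow> cart_diff_cat C \<and>
     abstract_kleisli C So Sa eps th \<and>
     (\<forall>A \<in> obj C. \<forall>B \<in> obj C.
        theta_natural C Sa th (p1 C A B) \<and> theta_natural C Sa th (p2 C A B)) \<and>
     strong_cart_diff_functor C C So Sa \<and>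
     (\<forall>A \<in> obj C. D_linear C (eps A) \<and> D_linear C (th A))"

text \<open>A Kleisli map f : A \<rightarrow> B is the triple (A, B, [[f]]) with [[f]] : A \<rightarrow> S(B) in theta-nat[X].\<close>

definition kl_cat :: "('o,'a,'k,'m) cdc_scheme \<Rightarrow> ('o \<Rightarrow> 'o) \<Rightarrow> ('a \<Rightarrow> 'a) \<Rightarrow>
    ('o \<Rightarrow> 'a) \<Rightarrow> ('o \<Rightarrow> 'a) \<Rightarrow> ('o, 'o \<times> 'o \<times> 'a, 'k) cdc" where
  "kl_cat X So Sa eps th =
    (let Y = theta_nat X Sa th;
         delta = (\<lambda>A. Sa (eps A));
         om = (\<lambda>A B. tup Y (Sa (p1 Y A B)) (Sa (p2 Y A B)));
         omi = (\<lambda>A B. inv_arr Y (om A B) (So (prd Y A B)) (prd Y (So A) (So B)))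
     in \<lparr> obj = obj Y,
         arr = {(A, B, f) | A B f. B \<in> obj Y \<and> f \<in> hom Y A (So B)},
         dm = (\<lambda>(A, B, f). A),
         cd = (\<lambda>(A, B, f). B),
         ident = (\<lambda>A. (A, A, th A)),
         cmp = (\<lambda>(B', D, g) (A, B, f). (A, D, cmp Y (delta D) (cmp Y (Sa g) f))),
         smul = (\<lambda>r (A, B, f). (A, B, smul Y r f)),
         pls = (\<lambda>(A, B, f) (A', B', g). (A, B, pls Y f g)),
         zr = (\<lambda>A B. (A, B, zr Y A (So B))),
         trm = trm Y,
         bng = (\<lambda>A. (A, trm Y,
                 cmp Y (inv_arr Y (bng Y (So (trm Y))) (So (trm Y)) (trm Y)) (bng Y A))),
         prd = prd Y,
         p1 = (\<lambda>A B. (prd Y A B, A, cmp Y (th A) (p1 Y A B))),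
         p2 = (\<lambda>A B. (prd Y A B, B, cmp Y (th B) (p2 Y A B))),
         tup = (\<lambda>(D, A, f) (D', B, g). (D, prd Y A B, cmp Y (omi A B) (tup Y f g))),
         Dif = (\<lambda>(A, B, f). (prd Y A A, B, Dif Y f)) \<rparr>)"

definition G_theta :: "('o,'a,'k,'m) cdc_scheme \<Rightarrow> ('a \<Rightarrow> 'a) \<Rightarrow> ('o \<Rightarrow> 'a) \<Rightarrow>
    'a \<Rightarrow> 'o \<times> 'o \<times> 'a" where
  "G_theta X Sa th f = (dm X f, cd X f, cmp X (Sa f) (th (dm X f)))"

definition G_theta_inv :: "('o,'a,'k,'m) cdc_scheme \<Rightarrow> ('o \<Rightarrow> 'a) \<Rightarrow>
    'o \<times> 'o \<times> 'a \<Rightarrow> 'a" where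
  "G_theta_inv X eps = (\<lambda>(A, B, f). cmp X (eps B) f)"

end

theory Submission
  imports Defs
begin

text \<open>The theta-natural maps are closed under all of the Cartesian differential structure:
  for pairings because omega is invertible and the projections are theta-natural, for D because
  theta is D-linear and S is a strong differential functor, which gives
  D[S f o theta] = S(D f) o theta. On this subcategory (S, S eps, theta) is a monad with D-linear
  unit and multiplication. The map G f = S f o theta is a bijection from the arrows of X onto the
  Kleisli arrows, with inverse eps o -, and it commutes on the nose with identities, composition,
  the additive structure, products and D. Hence the Kleisli category satisfies the axioms because
  X does, and G and its inverse are strict Cartesian differential functors.\<close>

locale categorical =
  fixes C :: "('o,'a,'m) cat_scheme"
  assumes category: "category C"
begin

lemma dm_in_obj[simp]: "f \<in> arr C \<Longrightarrow> dm C f \<in> obj C"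
  and cd_in_obj[simp]: "f \<in> arr C \<Longrightarrow> cd C f \<in> obj C"
  using category unfolding category_def by blast+

lemma ident_typing[simp]:
  "A \<in> obj C \<Longrightarrow> ident C A \<in> arr C"
  "A \<in> obj C \<Longrightarrow> dm C (ident C A) = A"
  "A \<in> obj C \<Longrightarrow> cd C (ident C A) = A"
  using category unfolding category_def hom_def by blast+

lemma cmp_typing[simp]:
  assumes "f \<in> arr C" "g \<in> arr C" "dm C g = cd C f"
  shows "cmp C g f \<in> arr C" "dm C (cmp C g f) = dm C f" "cd C (cmp C g f) = cd C g"
proof -
  have "f \<in> hom C (dm C f) (cd C f)" "g \<in> hom C (cd C f) (cd C g)"
    using assms by (auto simp: hom_def)
  then have "cmp C g f \<in> hom C (dm C f) (cd C g)"
    using category unfolding category_def by blast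
  then show "cmp C g f \<in> arr C" "dm C (cmp C g f) = dm C f" "cd C (cmp C g f) = cd C g"
    by (auto simp: hom_def)
qed

lemma cmp_ident_left[simp]: "f \<in> arr C \<Longrightarrow> B = cd C f \<Longrightarrow> cmp C (ident C B) f = f"
  and cmp_ident_right[simp]: "f \<in> arr C \<Longrightarrow> A = dm C f \<Longrightarrow> cmp C f (ident C A) = f"
  using category unfolding category_def hom_def by blast+

lemma cmp_assoc[simp]:
  assumes "f \<in> arr C" "g \<in> arr C" "h \<in> arr C" "dm C g = cd C f" "dm C h = cd C g"
  shows "cmp C (cmp C h g) f = cmp C h (cmp C g f)"
proof -
  have "f \<in> hom C (dm C f) (cd C f)" "g \<in> hom C (cd C f) (cd C g)" "h \<in> hom C (cd C g) (cd C h)"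
    using assms by (auto simp: hom_def)
  then show ?thesis
    using category unfolding category_def by metis
qed

lemma cmp_cmp_eq:
  assumes "cmp C a b = c" "a \<in> arr C" "b \<in> arr C" "x \<in> arr C" "dm C a = cd C b" "dm C b = cd C x"
  shows "cmp C a (cmp C b x) = cmp C c x"
  using assms cmp_assoc[of x b a] by simp

lemma cmp_cmp_eq_cmp_cmp:
  assumes "cmp C a b = cmp C c d" "a \<in> arr C" "b \<in> arr C" "c \<in> arr C" "d \<in> arr C" "x \<in> arr C"
    "dm C a = cd C b" "dm C c = cd C d" "dm C b = cd C x" "dm C d = cd C x"
  shows "cmp C a (cmp C b x) = cmp C c (cmp C d x)"
  using assms cmp_assoc[of x b a] cmp_assoc[of x d c] by simp

lemma inverse_unique:
  assumes f: "f \<in> hom C A B" and g: "g \<in> hom C B A" "cmp C f g = ident C B"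
    and g': "g' \<in> hom C B A" "cmp C g' f = ident C A"
  shows "g' = g"
proof -
  have "g' = cmp C g' (cmp C f g)"
    using g g' by (simp add: hom_def)
  also have "\<dots> = cmp C (cmp C g' f) g"
    by (rule cmp_assoc[symmetric]) (use f g g' in \<open>auto simp: hom_def\<close>)
  also have "\<dots> = g"
    using g g' by (simp add: hom_def del: cmp_assoc)
  finally show ?thesis .
qed

lemma inv_arr_eqI:
  assumes f: "f \<in> hom C A B" and g: "g \<in> hom C B A" "cmp C g f = ident C A" "cmp C f g = ident C B"
  shows "is_iso C f A B" "inv_arr C f A B = g"
proof -
  show "is_iso C f A B"
    using f g unfolding is_iso_def by blast
  show "inv_arr C f A B = g"
    unfolding inv_arr_def using f g inverse_unique[OF f g(1,3)] by blast
qed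

lemma inv_arr_iso:
  assumes "is_iso C f A B"
  shows "inv_arr C f A B \<in> hom C B A" "cmp C (inv_arr C f A B) f = ident C A"
    "cmp C f (inv_arr C f A B) = ident C B"
proof -
  obtain g where g: "g \<in> hom C B A" "cmp C g f = ident C A" "cmp C f g = ident C B"
    and f_hom: "f \<in> hom C A B"
    using assms unfolding is_iso_def by blast
  then show "inv_arr C f A B \<in> hom C B A" "cmp C (inv_arr C f A B) f = ident C A"
    "cmp C f (inv_arr C f A B) = ident C B"
    using inv_arr_eqI(2)[OF f_hom g] by simp_all
qed

lemma ident_iso: "A \<in> obj C \<Longrightarrow> is_iso C (ident C A) A A"
  using inv_arr_eqI(1)[of "ident C A" A A "ident C A"] by (simp add: hom_def)

end

locale cartesian_differential_category =
  fixes C :: "('o,'a,'k::comm_semiring_1,'m) cdc_scheme"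
  assumes cart_diff_cat: "cart_diff_cat C"
begin

lemma cart_left_klinear: "cart_left_klinear C"
  using cart_diff_cat unfolding cart_diff_cat_def by blast

lemma left_klinear: "left_klinear C"
  using cart_left_klinear unfolding cart_left_klinear_def by blast

lemma category: "category C"
  using left_klinear unfolding left_klinear_def by blast

lemma has_products: "has_products C"
  using cart_left_klinear unfolding cart_left_klinear_def by blast

end

sublocale cartesian_differential_category \<subseteq> categorical C
  by unfold_locales (rule category)

context cartesian_differential_category
begin

lemma zr_typing[simp]:
  "A \<in> obj C \<Longrightarrow> B \<in> obj C \<Longrightarrow> zr C A B \<in> arr C"
  "A \<in> obj C \<Longrightarrow> B \<in> obj C \<Longrightarrow> dm C (zr C A B) = A"
  "A \<in> obj C \<Longrightarrow> B \<in> obj C \<Longrightarrow> cd C (zr C A B) = B"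
  using left_klinear unfolding left_klinear_def hom_def by blast+

lemma hom_module:
  assumes "f \<in> hom C A B" "g \<in> hom C A B" "h \<in> hom C A B"
  shows "pls C f g \<in> hom C A B \<and> smul C r f \<in> hom C A B \<and>
    pls C (pls C f g) h = pls C f (pls C g h) \<and>
    pls C f g = pls C g f \<and>
    pls C f (zr C A B) = f \<and>
    smul C r (pls C f g) = pls C (smul C r f) (smul C r g) \<and>
    smul C (r + s) f = pls C (smul C r f) (smul C s f) \<and>
    smul C (r * s) f = smul C r (smul C s f) \<and>
    smul C 1 f = f \<and>
    smul C 0 f = zr C A B \<and>
    smul C r (zr C A B) = zr C A B"
proof -
  have "A \<in> obj C" "B \<in> obj C"
    using assms by (auto simp: hom_def)
  with assms show ?thesis
    using left_klinear unfolding left_klinear_def by blast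
qed

lemma
  assumes "f \<in> arr C" "g \<in> arr C" "h \<in> arr C" "dm C g = dm C f" "cd C g = cd C f"
    "dm C h = dm C f" "cd C h = cd C f"
  shows pls_assoc: "pls C (pls C f g) h = pls C f (pls C g h)"
    and pls_commute: "pls C f g = pls C g f"
    and smul_pls: "smul C r (pls C f g) = pls C (smul C r f) (smul C r g)"
    and smul_add: "smul C (r + s) f = pls C (smul C r f) (smul C s f)"
    and smul_mult: "smul C (r * s) f = smul C r (smul C s f)"
  using hom_module[of f "dm C f" "cd C f" g h r s] assms by (auto simp: hom_def)

lemma pls_typing[simp]:
  assumes "f \<in> arr C" "g \<in> arr C" "dm C g = dm C f" "cd C g = cd C f"
  shows "pls C f g \<in> arr C" "dm C (pls C f g) = dm C f" "cd C (pls C f g) = cd C f"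
proof -
  have "pls C f g \<in> hom C (dm C f) (cd C f)"
    using hom_module[of f "dm C f" "cd C f" g f] assms unfolding hom_def by blast
  then show "pls C f g \<in> arr C" "dm C (pls C f g) = dm C f" "cd C (pls C f g) = cd C f"
    by (simp_all add: hom_def)
qed

lemma smul_typing[simp]:
  assumes "f \<in> arr C"
  shows "smul C r f \<in> arr C" "dm C (smul C r f) = dm C f" "cd C (smul C r f) = cd C f"
proof -
  have "smul C r f \<in> hom C (dm C f) (cd C f)"
    using hom_module[of f "dm C f" "cd C f" f f r] assms unfolding hom_def by blast
  then show "smul C r f \<in> arr C" "dm C (smul C r f) = dm C f" "cd C (smul C r f) = cd C f"
    by (simp_all add: hom_def)
qed

lemma pls_zr[simp]: "f \<in> arr C \<Longrightarrow> B = cd C f \<Longrightarrow> A = dm C f \<Longrightarrow> pls C f (zr C A B) = f"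
  and smul_one[simp]: "f \<in> arr C \<Longrightarrow> smul C 1 f = f"
  and smul_zero[simp]: "f \<in> arr C \<Longrightarrow> smul C 0 f = zr C (dm C f) (cd C f)"
  using hom_module[of f "dm C f" "cd C f" f f] by (auto simp: hom_def)

lemma smul_zr[simp]: "A \<in> obj C \<Longrightarrow> B \<in> obj C \<Longrightarrow> smul C r (zr C A B) = zr C A B"
  using hom_module[of "zr C A B" A B "zr C A B" "zr C A B" r] by (simp add: hom_def)

lemma precomposition_linear:
  "f \<in> hom C B D \<Longrightarrow> g \<in> hom C B D \<Longrightarrow> x \<in> hom C A B \<Longrightarrow>
   cmp C (pls C (smul C r f) (smul C s g)) x = pls C (smul C r (cmp C f x)) (smul C s (cmp C g x))"
  using left_klinear unfolding left_klinear_def by blast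

lemma pls_cmp[simp]:
  "f \<in> arr C \<Longrightarrow> g \<in> arr C \<Longrightarrow> x \<in> arr C \<Longrightarrow> dm C g = dm C f \<Longrightarrow> cd C g = cd C f \<Longrightarrow>
   dm C f = cd C x \<Longrightarrow> cmp C (pls C f g) x = pls C (cmp C f x) (cmp C g x)"
  using precomposition_linear[of f "dm C f" "cd C f" g x "dm C x" 1 1] by (simp add: hom_def)

lemma zr_cmp[simp]:
  assumes "x \<in> arr C" "B = cd C x" "D \<in> obj C"
  shows "cmp C (zr C B D) x = zr C (dm C x) D"
  using precomposition_linear[of "zr C B D" B D "zr C B D" x "dm C x" 0 0] assms
  by (simp add: hom_def)

lemma smul_cmp[simp]:
  assumes "f \<in> arr C" "x \<in> arr C" "dm C f = cd C x"
  shows "cmp C (smul C r f) x = smul C r (cmp C f x)"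
  using precomposition_linear[of f "dm C f" "cd C f" f x "dm C x" r 0] assms
  by (simp add: hom_def)

lemma trm_obj[simp]: "trm C \<in> obj C"
  using has_products unfolding has_products_def by blast

lemma bng_typing[simp]:
  "A \<in> obj C \<Longrightarrow> bng C A \<in> arr C"
  "A \<in> obj C \<Longrightarrow> dm C (bng C A) = A"
  "A \<in> obj C \<Longrightarrow> cd C (bng C A) = trm C"
  using has_products unfolding has_products_def hom_def by blast+

lemma bng_unique: "f \<in> arr C \<Longrightarrow> cd C f = trm C \<Longrightarrow> f = bng C (dm C f)"
  using has_products unfolding has_products_def hom_def by auto

lemma prd_obj[simp]: "A \<in> obj C \<Longrightarrow> B \<in> obj C \<Longrightarrow> prd C A B \<in> obj C"
  using has_products unfolding has_products_def by blast

lemma p1_typing[simp]: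
  "A \<in> obj C \<Longrightarrow> B \<in> obj C \<Longrightarrow> p1 C A B \<in> arr C"
  "A \<in> obj C \<Longrightarrow> B \<in> obj C \<Longrightarrow> dm C (p1 C A B) = prd C A B"
  "A \<in> obj C \<Longrightarrow> B \<in> obj C \<Longrightarrow> cd C (p1 C A B) = A"
  and p2_typing[simp]:
  "A \<in> obj C \<Longrightarrow> B \<in> obj C \<Longrightarrow> p2 C A B \<in> arr C"
  "A \<in> obj C \<Longrightarrow> B \<in> obj C \<Longrightarrow> dm C (p2 C A B) = prd C A B"
  "A \<in> obj C \<Longrightarrow> B \<in> obj C \<Longrightarrow> cd C (p2 C A B) = B"
  using has_products unfolding has_products_def hom_def by blast+

lemma tup_universal:
  assumes "f \<in> arr C" "g \<in> arr C" "dm C g = dm C f"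
  shows "tup C f g \<in> hom C (dm C f) (prd C (cd C f) (cd C g)) \<and>
    cmp C (p1 C (cd C f) (cd C g)) (tup C f g) = f \<and> cmp C (p2 C (cd C f) (cd C g)) (tup C f g) = g"
proof -
  have "f \<in> hom C (dm C f) (cd C f)" "g \<in> hom C (dm C f) (cd C g)" "cd C f \<in> obj C" "cd C g \<in> obj C"
    using assms by (auto simp: hom_def)
  then show ?thesis
    using has_products unfolding has_products_def by blast
qed

lemma tup_typing[simp]:
  "f \<in> arr C \<Longrightarrow> g \<in> arr C \<Longrightarrow> dm C g = dm C f \<Longrightarrow> tup C f g \<in> arr C"
  "f \<in> arr C \<Longrightarrow> g \<in> arr C \<Longrightarrow> dm C g = dm C f \<Longrightarrow> dm C (tup C f g) = dm C f"
  "f \<in> arr C \<Longrightarrow> g \<in> arr C \<Longrightarrow> dm C g = dm C f \<Longrightarrow> cd C (tup C f g) = prd C (cd C f) (cd C g)"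
  using tup_universal unfolding hom_def by blast+

lemma p1_tup[simp]:
  "f \<in> arr C \<Longrightarrow> g \<in> arr C \<Longrightarrow> dm C g = dm C f \<Longrightarrow> A = cd C f \<Longrightarrow> B = cd C g \<Longrightarrow>
   cmp C (p1 C A B) (tup C f g) = f"
  and p2_tup[simp]:
  "f \<in> arr C \<Longrightarrow> g \<in> arr C \<Longrightarrow> dm C g = dm C f \<Longrightarrow> A = cd C f \<Longrightarrow> B = cd C g \<Longrightarrow>
   cmp C (p2 C A B) (tup C f g) = g"
  using tup_universal by blast+

lemma p1_tup_cmp[simp]:
  "f \<in> arr C \<Longrightarrow> g \<in> arr C \<Longrightarrow> dm C g = dm C f \<Longrightarrow> A = cd C f \<Longrightarrow> B = cd C g \<Longrightarrow>
   x \<in> arr C \<Longrightarrow> cd C x = dm C f \<Longrightarrow> cmp C (p1 C A B) (cmp C (tup C f g) x) = cmp C f x"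
  by (rule cmp_cmp_eq[OF p1_tup]) simp_all

lemma p2_tup_cmp[simp]:
  "f \<in> arr C \<Longrightarrow> g \<in> arr C \<Longrightarrow> dm C g = dm C f \<Longrightarrow> A = cd C f \<Longrightarrow> B = cd C g \<Longrightarrow>
   x \<in> arr C \<Longrightarrow> cd C x = dm C f \<Longrightarrow> cmp C (p2 C A B) (cmp C (tup C f g) x) = cmp C g x"
  by (rule cmp_cmp_eq[OF p2_tup]) simp_all

lemma tup_eta:
  "h \<in> arr C \<Longrightarrow> A \<in> obj C \<Longrightarrow> B \<in> obj C \<Longrightarrow> cd C h = prd C A B \<Longrightarrow>
   tup C (cmp C (p1 C A B) h) (cmp C (p2 C A B) h) = h"
  using has_products unfolding has_products_def hom_def by blast

lemma tup_p1_p2[simp]: "A \<in> obj C \<Longrightarrow> B \<in> obj C \<Longrightarrow> tup C (p1 C A B) (p2 C A B) = ident C (prd C A B)"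
  using tup_eta[of "ident C (prd C A B)" A B] by simp

lemma tup_cmp[simp]:
  assumes "f \<in> arr C" "g \<in> arr C" "dm C g = dm C f" "h \<in> arr C" "cd C h = dm C f"
  shows "cmp C (tup C f g) h = tup C (cmp C f h) (cmp C g h)"
proof -
  have "tup C (cmp C (p1 C (cd C f) (cd C g)) (cmp C (tup C f g) h))
      (cmp C (p2 C (cd C f) (cd C g)) (cmp C (tup C f g) h)) = cmp C (tup C f g) h"
    using assms by (intro tup_eta) auto
  then show ?thesis
    using assms by simp
qed

lemma p1_cmp_linear:
  "x \<in> arr C \<Longrightarrow> y \<in> arr C \<Longrightarrow> dm C y = dm C x \<Longrightarrow> cd C x = prd C A B \<Longrightarrow> cd C y = prd C A B \<Longrightarrow>
   A \<in> obj C \<Longrightarrow> B \<in> obj C \<Longrightarrow>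
   cmp C (p1 C A B) (pls C (smul C r x) (smul C s y))
     = pls C (smul C r (cmp C (p1 C A B) x)) (smul C s (cmp C (p1 C A B) y))"
  and p2_cmp_linear:
  "x \<in> arr C \<Longrightarrow> y \<in> arr C \<Longrightarrow> dm C y = dm C x \<Longrightarrow> cd C x = prd C A B \<Longrightarrow> cd C y = prd C A B \<Longrightarrow>
   A \<in> obj C \<Longrightarrow> B \<in> obj C \<Longrightarrow>
   cmp C (p2 C A B) (pls C (smul C r x) (smul C s y))
     = pls C (smul C r (cmp C (p2 C A B) x)) (smul C s (cmp C (p2 C A B) y))"
  using cart_left_klinear unfolding cart_left_klinear_def klinear_map_def hom_def by simp_all

lemmas differential_axioms = cart_diff_cat[unfolded cart_diff_cat_def, THEN conjunct2, rule_format]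

lemma Dif_typing[simp]:
  "f \<in> arr C \<Longrightarrow> Dif C f \<in> arr C"
  "f \<in> arr C \<Longrightarrow> dm C (Dif C f) = prd C (dm C f) (dm C f)"
  "f \<in> arr C \<Longrightarrow> cd C (Dif C f) = cd C f"
  using differential_axioms[of "dm C f" "cd C f"] unfolding hom_def by auto

lemma Dif_linear_comb:
  "f \<in> arr C \<Longrightarrow> g \<in> arr C \<Longrightarrow> dm C g = dm C f \<Longrightarrow> cd C g = cd C f \<Longrightarrow>
   Dif C (pls C (smul C r f) (smul C s g)) = pls C (smul C r (Dif C f)) (smul C s (Dif C g))"
  using differential_axioms[of "dm C f" "cd C f"] unfolding hom_def by auto

lemma Dif_linear_in_direction:
  assumes "f \<in> arr C" "A = dm C f"
  shows "let AA = prd C A A; T = prd C A AA;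
      q1 = p1 C A AA; q2 = cmp C (p1 C A A) (p2 C A AA); q3 = cmp C (p2 C A A) (p2 C A AA)
    in cmp C (Dif C f) (tup C q1 (pls C (smul C r q2) (smul C s q3)))
      = pls C (smul C r (cmp C (Dif C f) (tup C q1 q2))) (smul C s (cmp C (Dif C f) (tup C q1 q3)))"
  using differential_axioms[of "dm C f" "cd C f"] assms unfolding hom_def by auto

lemma Dif_ident[simp]: "A \<in> obj C \<Longrightarrow> Dif C (ident C A) = p2 C A A"
  and Dif_bng[simp]: "A \<in> obj C \<Longrightarrow> Dif C (bng C A) = bng C (prd C A A)"
  using differential_axioms[of A A] by blast+

lemma Dif_p1[simp]:
  "A \<in> obj C \<Longrightarrow> B \<in> obj C \<Longrightarrow> Dif C (p1 C A B) = cmp C (p1 C A B) (p2 C (prd C A B) (prd C A B))"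
  and Dif_p2[simp]:
  "A \<in> obj C \<Longrightarrow> B \<in> obj C \<Longrightarrow> Dif C (p2 C A B) = cmp C (p2 C A B) (p2 C (prd C A B) (prd C A B))"
  using differential_axioms[of A B] by blast+

lemma Dif_tup[simp]:
  assumes "f \<in> arr C" "g \<in> arr C" "dm C g = dm C f"
  shows "Dif C (tup C f g) = tup C (Dif C f) (Dif C g)"
proof -
  have "f \<in> hom C (dm C f) (cd C f)" "g \<in> hom C (dm C f) (cd C g)"
    "dm C f \<in> obj C" "cd C f \<in> obj C" "cd C g \<in> obj C"
    using assms by (auto simp: hom_def)
  then show ?thesis
    using differential_axioms[of "dm C f" "cd C f"] assms by blast
qed

lemma Dif_cmp:
  assumes "f \<in> arr C" "g \<in> arr C" "dm C g = cd C f" "A = dm C f"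
  shows "Dif C (cmp C g f) = cmp C (Dif C g) (tup C (cmp C f (p1 C A A)) (Dif C f))"
proof -
  have "f \<in> hom C (dm C f) (cd C f)" "g \<in> hom C (cd C f) (cd C g)"
    "dm C f \<in> obj C" "cd C f \<in> obj C" "cd C g \<in> obj C"
    using assms by (auto simp: hom_def)
  then show ?thesis
    using differential_axioms[of "dm C f" "cd C f"] assms by blast
qed

lemma Dif_Dif:
  assumes "f \<in> arr C" "A = dm C f"
  shows "let Q = prd C A A in
      cmp C (Dif C (Dif C f)) (tup C (tup C (p1 C A A) (zr C Q A)) (tup C (zr C Q A) (p2 C A A)))
        = Dif C f \<and>
      (let x1 = cmp C (p1 C A A) (p1 C Q Q); x2 = cmp C (p2 C A A) (p1 C Q Q);
           x3 = cmp C (p1 C A A) (p2 C Q Q); x4 = cmp C (p2 C A A) (p2 C Q Q) in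
       cmp C (Dif C (Dif C f)) (tup C (tup C x1 x2) (tup C x3 x4))
         = cmp C (Dif C (Dif C f)) (tup C (tup C x1 x3) (tup C x2 x4)))"
  using differential_axioms[of "dm C f" "cd C f"] assms unfolding hom_def by auto

lemma D_linear_cmp_linear:
  assumes f: "f \<in> arr C" "D_linear C f"
    and xy: "x \<in> arr C" "y \<in> arr C" "dm C y = dm C x" "cd C x = dm C f" "cd C y = dm C f"
  shows "cmp C f (pls C (smul C r x) (smul C s y)) = pls C (smul C r (cmp C f x)) (smul C s (cmp C f y))"
proof -
  define A where "A = dm C f"
  let ?q1 = "p1 C A (prd C A A)"
  let ?q2 = "cmp C (p1 C A A) (p2 C A (prd C A A))"
  let ?q3 = "cmp C (p2 C A A) (p2 C A (prd C A A))"
  let ?h = "tup C x (tup C x y)"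
  have A: "A \<in> obj C" "dm C f = A" "cd C x = A" "cd C y = A"
    using f xy by (simp_all add: A_def)
  have Dif_f: "cmp C (Dif C f) (tup C x z) = cmp C f z"
    if "z \<in> arr C" "dm C z = dm C x" "cd C z = A" for z
    using f that xy A unfolding D_linear_def by simp
  have CD2: "cmp C (Dif C f) (tup C ?q1 (pls C (smul C r ?q2) (smul C s ?q3)))
      = pls C (smul C r (cmp C (Dif C f) (tup C ?q1 ?q2))) (smul C s (cmp C (Dif C f) (tup C ?q1 ?q3)))"
    using Dif_linear_in_direction[OF f(1) A_def] by (simp add: Let_def)
  have "cmp C f (pls C (smul C r x) (smul C s y)) = cmp C (Dif C f) (tup C x (pls C (smul C r x) (smul C s y)))"
    using Dif_f xy A by simp
  also have "\<dots> = cmp C (cmp C (Dif C f) (tup C ?q1 (pls C (smul C r ?q2) (smul C s ?q3)))) ?h"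
    using f xy A by simp
  also have "\<dots> = cmp C (pls C (smul C r (cmp C (Dif C f) (tup C ?q1 ?q2)))
      (smul C s (cmp C (Dif C f) (tup C ?q1 ?q3)))) ?h"
    by (simp only: CD2)
  also have "\<dots> = pls C (smul C r (cmp C (Dif C f) (tup C x x))) (smul C s (cmp C (Dif C f) (tup C x y)))"
    using f xy A by simp
  also have "\<dots> = pls C (smul C r (cmp C f x)) (smul C s (cmp C f y))"
    using Dif_f xy A by simp
  finally show ?thesis .
qed

lemma D_linear_cmp_smul:
  "h \<in> arr C \<Longrightarrow> D_linear C h \<Longrightarrow> x \<in> arr C \<Longrightarrow> cd C x = dm C h \<Longrightarrow>
   cmp C h (smul C r x) = smul C r (cmp C h x)"
  using D_linear_cmp_linear[of h x x r 0] by simp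

lemma D_linear_cmp_pls:
  "h \<in> arr C \<Longrightarrow> D_linear C h \<Longrightarrow> x \<in> arr C \<Longrightarrow> y \<in> arr C \<Longrightarrow> dm C y = dm C x \<Longrightarrow>
   cd C x = dm C h \<Longrightarrow> cd C y = dm C h \<Longrightarrow> cmp C h (pls C x y) = pls C (cmp C h x) (cmp C h y)"
  using D_linear_cmp_linear[of h x y 1 1] by simp

lemma D_linear_cmp_zr:
  "h \<in> arr C \<Longrightarrow> D_linear C h \<Longrightarrow> A \<in> obj C \<Longrightarrow> B = dm C h \<Longrightarrow> cmp C h (zr C A B) = zr C A (cd C h)"
  using D_linear_cmp_linear[of h "zr C A B" "zr C A B" 0 0] by simp

lemma cart_diff_cat_subcategory:
  assumes P_ident: "\<And>A. A \<in> obj C \<Longrightarrow> P (ident C A)"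
    and P_cmp: "\<And>f g. f \<in> arr C \<Longrightarrow> g \<in> arr C \<Longrightarrow> dm C g = cd C f \<Longrightarrow> P f \<Longrightarrow> P g \<Longrightarrow> P (cmp C g f)"
    and P_zr: "\<And>A B. A \<in> obj C \<Longrightarrow> B \<in> obj C \<Longrightarrow> P (zr C A B)"
    and P_smul: "\<And>f r. f \<in> arr C \<Longrightarrow> P f \<Longrightarrow> P (smul C r f)"
    and P_pls: "\<And>f g. f \<in> arr C \<Longrightarrow> g \<in> arr C \<Longrightarrow> dm C g = dm C f \<Longrightarrow> cd C g = cd C f \<Longrightarrow>
      P f \<Longrightarrow> P g \<Longrightarrow> P (pls C f g)"
    and P_bng: "\<And>A. A \<in> obj C \<Longrightarrow> P (bng C A)"
    and P_p1: "\<And>A B. A \<in> obj C \<Longrightarrow> B \<in> obj C \<Longrightarrow> P (p1 C A B)"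
    and P_p2: "\<And>A B. A \<in> obj C \<Longrightarrow> B \<in> obj C \<Longrightarrow> P (p2 C A B)"
    and P_tup: "\<And>f g. f \<in> arr C \<Longrightarrow> g \<in> arr C \<Longrightarrow> dm C g = dm C f \<Longrightarrow> P f \<Longrightarrow> P g \<Longrightarrow> P (tup C f g)"
    and P_Dif: "\<And>f. f \<in> arr C \<Longrightarrow> P f \<Longrightarrow> P (Dif C f)"
  shows "cart_diff_cat (C\<lparr>arr := {f \<in> arr C. P f}\<rparr>)" (is "cart_diff_cat ?Y")
proof -
  have hom_Y: "hom ?Y A B = {f \<in> hom C A B. P f}" for A B
    by (auto simp: hom_def)
  have category_Y: "category ?Y"
    using category unfolding category_def hom_Y by (auto simp: hom_def P_ident P_cmp)
  have sel: "obj ?Y = obj C" "pls ?Y = pls C" "smul ?Y = smul C" "zr ?Y = zr C" "cmp ?Y = cmp C"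
    "trm ?Y = trm C" "bng ?Y = bng C" "prd ?Y = prd C" "p1 ?Y = p1 C" "p2 ?Y = p2 C" "tup ?Y = tup C"
    "Dif ?Y = Dif C" "dm ?Y = dm C" "cd ?Y = cd C" "ident ?Y = ident C"
    by simp_all
  have "left_klinear ?Y"
    using left_klinear category_Y unfolding left_klinear_def hom_Y
    by (auto simp: hom_def P_zr P_smul P_pls pls_assoc pls_commute smul_pls smul_add smul_mult)
  moreover have "has_products ?Y"
    using has_products unfolding has_products_def hom_Y
    by (auto simp: hom_def P_bng P_p1 P_p2 P_tup)
  moreover have "klinear_map ?Y (p1 ?Y A B) \<and> klinear_map ?Y (p2 ?Y A B)"
    if "A \<in> obj ?Y" "B \<in> obj ?Y" for A B
    using cart_left_klinear that unfolding cart_left_klinear_def klinear_map_def hom_Y by auto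
  ultimately have "cart_left_klinear ?Y"
    unfolding cart_left_klinear_def by blast
  moreover have P_Dif_hom: "P (Dif C f)" if "f \<in> hom C A B" "P f" for f A B
    using that P_Dif by (simp add: hom_def)
  ultimately show ?thesis
    using differential_axioms unfolding cart_diff_cat_def hom_Y sel
    by (intro conjI ballI allI impI; clarsimp simp only: mem_Collect_eq)
qed

end

section \<open>Isomorphic copies of Cartesian differential categories\<close>

locale cart_diff_transport = cartesian_differential_category C
  for C :: "('o,'a,'k::comm_semiring_1,'m) cdc_scheme" +
  fixes E :: "('o,'b,'k,'n) cdc_scheme" and F :: "'a \<Rightarrow> 'b"
  assumes obj_E: "obj E = obj C" and trm_E: "trm E = trm C" and prd_E: "prd E = prd C"
    and arr_E: "arr E = F ` arr C"
    and inj: "inj_on F (arr C)"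
    and F_dm: "\<And>f. f \<in> arr C \<Longrightarrow> dm E (F f) = dm C f"
    and F_cd: "\<And>f. f \<in> arr C \<Longrightarrow> cd E (F f) = cd C f"
    and F_ident: "\<And>A. A \<in> obj C \<Longrightarrow> ident E A = F (ident C A)"
    and F_cmp: "\<And>f g. f \<in> arr C \<Longrightarrow> g \<in> arr C \<Longrightarrow> dm C g = cd C f \<Longrightarrow>
      cmp E (F g) (F f) = F (cmp C g f)"
    and F_smul: "\<And>f r. f \<in> arr C \<Longrightarrow> smul E r (F f) = F (smul C r f)"
    and F_pls: "\<And>f g. f \<in> arr C \<Longrightarrow> g \<in> arr C \<Longrightarrow> dm C g = dm C f \<Longrightarrow> cd C g = cd C f \<Longrightarrow>
      pls E (F f) (F g) = F (pls C f g)"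
    and F_zr: "\<And>A B. A \<in> obj C \<Longrightarrow> B \<in> obj C \<Longrightarrow> zr E A B = F (zr C A B)"
    and F_bng: "\<And>A. A \<in> obj C \<Longrightarrow> bng E A = F (bng C A)"
    and F_p1: "\<And>A B. A \<in> obj C \<Longrightarrow> B \<in> obj C \<Longrightarrow> p1 E A B = F (p1 C A B)"
    and F_p2: "\<And>A B. A \<in> obj C \<Longrightarrow> B \<in> obj C \<Longrightarrow> p2 E A B = F (p2 C A B)"
    and F_tup: "\<And>f g. f \<in> arr C \<Longrightarrow> g \<in> arr C \<Longrightarrow> dm C g = dm C f \<Longrightarrow>
      tup E (F f) (F g) = F (tup C f g)"
    and F_Dif: "\<And>f. f \<in> arr C \<Longrightarrow> Dif E (F f) = F (Dif C f)"
begin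

lemma hom_E: "hom E A B = F ` hom C A B"
  using arr_E F_dm F_cd by (auto simp: hom_def)

lemma F_eq_iff: "f \<in> arr C \<Longrightarrow> g \<in> arr C \<Longrightarrow> F f = F g \<longleftrightarrow> f = g"
  using inj by (meson inj_on_contraD)

lemma F_in_hom_E: "f \<in> arr C \<Longrightarrow> F f \<in> F ` hom C A B \<longleftrightarrow> f \<in> hom C A B"
  using inj by (auto simp: hom_def inj_on_image_mem_iff)

lemmas transport = F_ident F_cmp F_smul F_pls F_zr F_bng F_p1 F_p2 F_tup F_Dif F_eq_iff F_in_hom_E
  F_dm F_cd obj_E trm_E prd_E arr_E

lemma cart_diff_cat_E: "cart_diff_cat E"
proof -
  have "category E"
    using category unfolding category_def hom_E by (auto simp: transport hom_def)
  then have "left_klinear E"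
    using left_klinear unfolding left_klinear_def hom_E
    by (auto simp: transport hom_def pls_assoc pls_commute smul_pls smul_add smul_mult)
  moreover have "has_products E"
    using has_products unfolding has_products_def hom_E
    by (auto simp: transport hom_def)
  moreover have "klinear_map E (p1 E A B) \<and> klinear_map E (p2 E A B)"
    if "A \<in> obj E" "B \<in> obj E" for A B
    using that unfolding klinear_map_def hom_E
    by (auto simp: transport hom_def p1_cmp_linear p2_cmp_linear)
  ultimately have "cart_left_klinear E"
    unfolding cart_left_klinear_def by blast
  then show ?thesis
    unfolding cart_diff_cat_def hom_E
    by (intro conjI ballI; auto simp: transport hom_def Let_def Dif_linear_comb Dif_cmp
        Dif_linear_in_direction[unfolded Let_def] Dif_Dif[unfolded Let_def])
qed

sublocale E: cartesian_differential_category E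
  by unfold_locales (rule cart_diff_cat_E)

lemma bng_E_trm: "bng E (trm E) = ident E (trm E)"
  using E.bng_unique[of "ident E (trm E)"] by simp

lemma omegaF_E: "A \<in> obj C \<Longrightarrow> B \<in> obj C \<Longrightarrow> omegaF C E F A B = ident E (prd E A B)"
  unfolding omegaF_def using F_tup[of "p1 C A B" "p2 C A B"] by (simp add: transport)

lemma strict_cart_diff_functor_F: "strict_cart_diff_functor C E (\<lambda>A. A) F"
  unfolding strict_cart_diff_functor_def strict_cart_klinear_functor_def strong_cart_klinear_functor_def
    is_functor_def
  using category E.category bng_E_trm omegaF_E E.ident_iso
  by (auto simp: transport hom_E hom_def)

lemma strict_cart_diff_functor_inverse:
  assumes F'_F: "\<And>f. f \<in> arr C \<Longrightarrow> F' (F f) = f"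
  shows "strict_cart_diff_functor E C (\<lambda>A. A) F'"
proof -
  have bng_C_trm: "bng C (trm C) = ident C (trm C)"
    using bng_unique[of "ident C (trm C)"] by simp
  have omegaF_C: "omegaF E C F' A B = ident C (prd C A B)" if "A \<in> obj C" "B \<in> obj C" for A B
    unfolding omegaF_def using that by (simp add: transport F'_F)
  show ?thesis
    unfolding strict_cart_diff_functor_def strict_cart_klinear_functor_def strong_cart_klinear_functor_def
      is_functor_def
    using category E.category bng_C_trm omegaF_C ident_iso
    by (auto simp: transport hom_E hom_def F'_F)
qed

end

locale cartesian_differential_abstract_kleisli =
  fixes X :: "('o,'a,'k::comm_semiring_1,'m) cdc_scheme" and So :: "'o \<Rightarrow> 'o" and Sa :: "'a \<Rightarrow> 'a"
    and eps :: "'o \<Rightarrow> 'a" and th :: "'o \<Rightarrow> 'a"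
  assumes cart_diff_abstract_kleisli: "cart_diff_abstract_kleisli X So Sa eps th"
begin

sublocale cartesian_differential_category X
  using cart_diff_abstract_kleisli unfolding cart_diff_abstract_kleisli_def
  by unfold_locales blast

abbreviation th_natural :: "'a \<Rightarrow> bool" where
  "th_natural f \<equiv> theta_natural X Sa th f"

abbreviation omega :: "'o \<Rightarrow> 'o \<Rightarrow> 'a" where
  "omega A B \<equiv> omegaF X X Sa A B"

definition omega_inv :: "'o \<Rightarrow> 'o \<Rightarrow> 'a" where
  "omega_inv A B = inv_arr X (omega A B) (So (prd X A B)) (prd X (So A) (So B))"

lemma abstract_kleisli: "abstract_kleisli X So Sa eps th"
  and S_strong_diff: "strong_cart_diff_functor X X So Sa"
  using cart_diff_abstract_kleisli unfolding cart_diff_abstract_kleisli_def by blast+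

lemma S_strong_linear: "strong_cart_klinear_functor X X So Sa"
  using S_strong_diff unfolding strong_cart_diff_functor_def by blast

lemma S_functor: "is_functor X X So Sa"
  using abstract_kleisli unfolding abstract_kleisli_def by blast

lemma So_obj[simp]: "A \<in> obj X \<Longrightarrow> So A \<in> obj X"
  and Sa_ident[simp]: "A \<in> obj X \<Longrightarrow> Sa (ident X A) = ident X (So A)"
  using S_functor unfolding is_functor_def by blast+

lemma Sa_typing[simp]:
  "f \<in> arr X \<Longrightarrow> Sa f \<in> arr X"
  "f \<in> arr X \<Longrightarrow> dm X (Sa f) = So (dm X f)"
  "f \<in> arr X \<Longrightarrow> cd X (Sa f) = So (cd X f)"
  using S_functor unfolding is_functor_def hom_def by auto

lemma Sa_cmp[simp]: "f \<in> arr X \<Longrightarrow> g \<in> arr X \<Longrightarrow> dm X g = cd X f \<Longrightarrow> Sa (cmp X g f) = cmp X (Sa g) (Sa f)"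
  using S_functor unfolding is_functor_def hom_def by auto

lemma Sa_cmp_eq: "f \<in> arr X \<Longrightarrow> g \<in> arr X \<Longrightarrow> dm X g = cd X f \<Longrightarrow> cmp X g f = h \<Longrightarrow>
  cmp X (Sa g) (Sa f) = Sa h"
  by (metis Sa_cmp)

lemma Sa_linear_comb:
  "f \<in> arr X \<Longrightarrow> g \<in> arr X \<Longrightarrow> dm X g = dm X f \<Longrightarrow> cd X g = cd X f \<Longrightarrow>
   Sa (pls X (smul X r f) (smul X s g)) = pls X (smul X r (Sa f)) (smul X s (Sa g))"
  using S_strong_linear unfolding strong_cart_klinear_functor_def hom_def by auto

lemma Sa_zr[simp]: "A \<in> obj X \<Longrightarrow> B \<in> obj X \<Longrightarrow> Sa (zr X A B) = zr X (So A) (So B)"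
  using Sa_linear_comb[of "zr X A B" "zr X A B" 0 0] by simp

lemma Sa_smul[simp]: "f \<in> arr X \<Longrightarrow> Sa (smul X r f) = smul X r (Sa f)"
  using Sa_linear_comb[of f f r 0] by simp

lemma Sa_pls[simp]:
  "f \<in> arr X \<Longrightarrow> g \<in> arr X \<Longrightarrow> dm X g = dm X f \<Longrightarrow> cd X g = cd X f \<Longrightarrow> Sa (pls X f g) = pls X (Sa f) (Sa g)"
  using Sa_linear_comb[of f g 1 1] by simp

lemma omega_iso: "A \<in> obj X \<Longrightarrow> B \<in> obj X \<Longrightarrow> is_iso X (omega A B) (So (prd X A B)) (prd X (So A) (So B))"
  using S_strong_linear unfolding strong_cart_klinear_functor_def by blast

lemma omega_typing[simp]:
  "A \<in> obj X \<Longrightarrow> B \<in> obj X \<Longrightarrow> omega A B \<in> arr X"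
  "A \<in> obj X \<Longrightarrow> B \<in> obj X \<Longrightarrow> dm X (omega A B) = So (prd X A B)"
  "A \<in> obj X \<Longrightarrow> B \<in> obj X \<Longrightarrow> cd X (omega A B) = prd X (So A) (So B)"
  unfolding omegaF_def by auto

lemma omega_inv_iso:
  assumes "A \<in> obj X" "B \<in> obj X"
  shows "omega_inv A B \<in> hom X (prd X (So A) (So B)) (So (prd X A B))"
    "cmp X (omega_inv A B) (omega A B) = ident X (So (prd X A B))"
    "cmp X (omega A B) (omega_inv A B) = ident X (prd X (So A) (So B))"
  using inv_arr_iso[OF omega_iso[OF assms]] unfolding omega_inv_def by auto

lemma omega_inv_typing[simp]:
  "A \<in> obj X \<Longrightarrow> B \<in> obj X \<Longrightarrow> omega_inv A B \<in> arr X"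
  "A \<in> obj X \<Longrightarrow> B \<in> obj X \<Longrightarrow> dm X (omega_inv A B) = prd X (So A) (So B)"
  "A \<in> obj X \<Longrightarrow> B \<in> obj X \<Longrightarrow> cd X (omega_inv A B) = So (prd X A B)"
  using omega_inv_iso(1) unfolding hom_def by auto

lemma omega_inv_omega_cmp[simp]:
  "A \<in> obj X \<Longrightarrow> B \<in> obj X \<Longrightarrow> x \<in> arr X \<Longrightarrow> cd X x = So (prd X A B) \<Longrightarrow>
   cmp X (omega_inv A B) (cmp X (omega A B) x) = x"
  using cmp_cmp_eq[OF omega_inv_iso(2)] by simp

lemma omega_cmp:
  "A \<in> obj X \<Longrightarrow> B \<in> obj X \<Longrightarrow> x \<in> arr X \<Longrightarrow> cd X x = So (prd X A B) \<Longrightarrow>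
   cmp X (omega A B) x = tup X (cmp X (Sa (p1 X A B)) x) (cmp X (Sa (p2 X A B)) x)"
  unfolding omegaF_def by simp

lemma omega_cmp_cancel:
  "A \<in> obj X \<Longrightarrow> B \<in> obj X \<Longrightarrow> x \<in> arr X \<Longrightarrow> y \<in> arr X \<Longrightarrow>
   cd X x = So (prd X A B) \<Longrightarrow> cd X y = So (prd X A B) \<Longrightarrow>
   cmp X (omega A B) x = cmp X (omega A B) y \<Longrightarrow> x = y"
  by (metis omega_inv_omega_cmp)

lemma omega_Sa_tup:
  assumes "f \<in> arr X" "g \<in> arr X" "dm X g = dm X f"
  shows "cmp X (omega (cd X f) (cd X g)) (Sa (tup X f g)) = tup X (Sa f) (Sa g)"
proof -
  have "cmp X (Sa (p1 X (cd X f) (cd X g))) (Sa (tup X f g)) = Sa f"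
    and "cmp X (Sa (p2 X (cd X f) (cd X g))) (Sa (tup X f g)) = Sa g"
    using assms by (auto intro: Sa_cmp_eq)
  then show ?thesis
    using omega_cmp[of "cd X f" "cd X g" "Sa (tup X f g)"] assms by simp
qed

lemma Sa_p2_omega_inv:
  assumes "A \<in> obj X" "B \<in> obj X"
  shows "cmp X (Sa (p2 X A B)) (omega_inv A B) = p2 X (So A) (So B)"
proof -
  have "cmp X (p2 X (So A) (So B)) (cmp X (omega A B) (omega_inv A B)) = p2 X (So A) (So B)"
    using assms omega_inv_iso(3)[OF assms] by simp
  then show ?thesis
    using assms unfolding omegaF_def by simp
qed

lemma Dif_Sa: "f \<in> arr X \<Longrightarrow> Dif X (Sa f) = cmp X (Sa (Dif X f)) (omega_inv (dm X f) (dm X f))"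
  using S_strong_diff unfolding strong_cart_diff_functor_def hom_def omega_inv_def by auto

lemma bng_S_trm_iso: "is_iso X (bng X (So (trm X))) (So (trm X)) (trm X)"
  using S_strong_linear unfolding strong_cart_klinear_functor_def by blast

lemma arr_to_S_trm_unique:
  assumes "f \<in> arr X" "g \<in> arr X" "dm X g = dm X f" "cd X f = So (trm X)" "cd X g = So (trm X)"
  shows "f = g"
proof -
  let ?b = "bng X (So (trm X))" and ?b' = "inv_arr X (bng X (So (trm X))) (So (trm X)) (trm X)"
  have b': "?b' \<in> arr X" "dm X ?b' = trm X" "cd X ?b' = So (trm X)" "cmp X ?b' ?b = ident X (So (trm X))"
    using inv_arr_iso[OF bng_S_trm_iso] unfolding hom_def by auto
  have retract: "cmp X ?b' (cmp X ?b x) = x" if "x \<in> arr X" "cd X x = So (trm X)" for x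
    using that b' cmp_assoc[of x ?b ?b'] by simp
  have "cmp X ?b f = cmp X ?b g"
    using assms bng_unique[of "cmp X ?b f"] bng_unique[of "cmp X ?b g"] by simp
  then show ?thesis
    using retract assms by metis
qed

lemmas kleisli_axioms = abstract_kleisli[unfolded abstract_kleisli_def, THEN conjunct2, THEN conjunct1,
  rule_format]

lemma eps_typing[simp]:
  "A \<in> obj X \<Longrightarrow> eps A \<in> arr X" "A \<in> obj X \<Longrightarrow> dm X (eps A) = So A" "A \<in> obj X \<Longrightarrow> cd X (eps A) = A"
  and th_typing[simp]:
  "A \<in> obj X \<Longrightarrow> th A \<in> arr X" "A \<in> obj X \<Longrightarrow> dm X (th A) = A" "A \<in> obj X \<Longrightarrow> cd X (th A) = So A"
  using kleisli_axioms unfolding hom_def by auto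

lemma eps_th[simp]: "A \<in> obj X \<Longrightarrow> cmp X (eps A) (th A) = ident X A"
  and eps_S_Sa_th[simp]: "A \<in> obj X \<Longrightarrow> cmp X (eps (So A)) (Sa (th A)) = ident X (So A)"
  and th_S_th: "A \<in> obj X \<Longrightarrow> cmp X (th (So A)) (th A) = cmp X (Sa (th A)) (th A)"
  using kleisli_axioms by blast+

lemma eps_natural: "f \<in> arr X \<Longrightarrow> cmp X f (eps (dm X f)) = cmp X (eps (cd X f)) (Sa f)"
  and th_S_natural: "f \<in> arr X \<Longrightarrow> cmp X (th (So (cd X f))) (Sa f) = cmp X (Sa (Sa f)) (th (So (dm X f)))"
  using abstract_kleisli unfolding abstract_kleisli_def hom_def by auto

lemma eps_natural_cmp:
  "f \<in> arr X \<Longrightarrow> x \<in> arr X \<Longrightarrow> cd X x = So (dm X f) \<Longrightarrow>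
   cmp X f (cmp X (eps (dm X f)) x) = cmp X (eps (cd X f)) (cmp X (Sa f) x)"
  by (rule cmp_cmp_eq_cmp_cmp[OF eps_natural]) auto

lemma p1_th_natural: "A \<in> obj X \<Longrightarrow> B \<in> obj X \<Longrightarrow> th_natural (p1 X A B)"
  and p2_th_natural: "A \<in> obj X \<Longrightarrow> B \<in> obj X \<Longrightarrow> th_natural (p2 X A B)"
  and eps_D_linear: "A \<in> obj X \<Longrightarrow> D_linear X (eps A)"
  and th_D_linear: "A \<in> obj X \<Longrightarrow> D_linear X (th A)"
  using cart_diff_abstract_kleisli unfolding cart_diff_abstract_kleisli_def by blast+

lemma Dif_eps: "A \<in> obj X \<Longrightarrow> Dif X (eps A) = cmp X (eps A) (p2 X (So A) (So A))"
  and Dif_th: "A \<in> obj X \<Longrightarrow> Dif X (th A) = cmp X (th A) (p2 X A A)"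
  using eps_D_linear th_D_linear unfolding D_linear_def by simp_all

lemma Sa_eps_Sa_th[simp]: "A \<in> obj X \<Longrightarrow> cmp X (Sa (eps A)) (Sa (th A)) = ident X (So A)"
  using Sa_cmp_eq[of "th A" "eps A" "ident X A"] by simp

lemma Sa_eps_Sa_th_cmp[simp]:
  "A \<in> obj X \<Longrightarrow> x \<in> arr X \<Longrightarrow> cd X x = So A \<Longrightarrow> cmp X (Sa (eps A)) (cmp X (Sa (th A)) x) = x"
  using cmp_assoc[of x "Sa (th A)" "Sa (eps A)"] by simp

lemma delta_natural:
  assumes "g \<in> arr X"
  shows "cmp X (Sa (eps (cd X g))) (Sa (Sa g)) = cmp X (Sa g) (Sa (eps (dm X g)))"
proof -
  have eps_g: "cmp X (eps (cd X g)) (Sa g) = cmp X g (eps (dm X g))"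
    using eps_natural[OF assms] by simp
  have "cmp X (Sa (eps (cd X g))) (Sa (Sa g)) = Sa (cmp X (eps (cd X g)) (Sa g))"
    using assms by simp
  also have "\<dots> = Sa (cmp X g (eps (dm X g)))"
    by (simp only: eps_g)
  also have "\<dots> = cmp X (Sa g) (Sa (eps (dm X g)))"
    using assms by simp
  finally show ?thesis .
qed

lemma delta_natural_cmp:
  "g \<in> arr X \<Longrightarrow> x \<in> arr X \<Longrightarrow> cd X x = So (So (dm X g)) \<Longrightarrow>
   cmp X (Sa (eps (cd X g))) (cmp X (Sa (Sa g)) x) = cmp X (Sa g) (cmp X (Sa (eps (dm X g))) x)"
  by (rule cmp_cmp_eq_cmp_cmp[OF delta_natural]) auto

text \<open>This unit law is not an axiom: it is obtained from eps_{SA} o S theta_A = 1 by naturality of eps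
  and theta_{SA} o theta_A = S theta_A o theta_A.\<close>

lemma Sa_eps_th_S: "A \<in> obj X \<Longrightarrow> cmp X (Sa (eps A)) (th (So A)) = ident X (So A)"
proof -
  assume A: "A \<in> obj X"
  let ?d = "Sa (eps A)"
  have "cmp X ?d (th (So A)) = cmp X ?d (cmp X (th (So A)) (cmp X (eps (So A)) (Sa (th A))))"
    using A by simp
  also have "\<dots> = cmp X ?d (cmp X (eps (So (So A))) (cmp X (Sa (th (So A))) (Sa (th A))))"
    using A eps_natural_cmp[of "th (So A)" "Sa (th A)"] by simp
  also have "\<dots> = cmp X ?d (cmp X (eps (So (So A))) (cmp X (Sa (Sa (th A))) (Sa (th A))))"
    using A Sa_cmp_eq[of "th A" "th (So A)", OF _ _ _ th_S_th] by simp
  also have "\<dots> = cmp X ?d (cmp X (Sa (th A)) (cmp X (eps (So A)) (Sa (th A))))"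
    using A eps_natural_cmp[of "Sa (th A)" "Sa (th A)"] by simp
  also have "\<dots> = ident X (So A)"
    using A by simp
  finally show ?thesis .
qed

lemma Sa_eps_D_linear: "A \<in> obj X \<Longrightarrow> D_linear X (Sa (eps A))"
  unfolding D_linear_def
  using Dif_Sa[of "eps A"] Dif_eps Sa_p2_omega_inv by simp

subsection \<open>Theta-natural maps\<close>

lemma th_natural_cmp_extend:
  "th_natural g \<Longrightarrow> g \<in> arr X \<Longrightarrow> x \<in> arr X \<Longrightarrow> cd X x = dm X g \<Longrightarrow>
   cmp X (th (cd X g)) (cmp X g x) = cmp X (Sa g) (cmp X (th (dm X g)) x)"
  unfolding theta_natural_def by (rule cmp_cmp_eq_cmp_cmp) auto

lemma th_natural_ident: "A \<in> obj X \<Longrightarrow> th_natural (ident X A)"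
  unfolding theta_natural_def by simp

lemma th_natural_cmp:
  assumes "f \<in> arr X" "g \<in> arr X" "dm X g = cd X f" "th_natural f" "th_natural g"
  shows "th_natural (cmp X g f)"
proof -
  have "cmp X (th (cd X g)) (cmp X g f) = cmp X (Sa g) (cmp X (th (dm X g)) f)"
    using assms th_natural_cmp_extend by simp
  also have "\<dots> = cmp X (Sa g) (cmp X (Sa f) (th (dm X f)))"
    using assms(3,4) unfolding theta_natural_def by simp
  also have "\<dots> = cmp X (Sa (cmp X g f)) (th (dm X f))"
    using assms by simp
  finally show ?thesis
    unfolding theta_natural_def using assms by simp
qed

lemma th_natural_Sa: "f \<in> arr X \<Longrightarrow> th_natural (Sa f)"
  unfolding theta_natural_def using th_S_natural by simp

lemma th_natural_th: "A \<in> obj X \<Longrightarrow> th_natural (th A)"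
  unfolding theta_natural_def using th_S_th by simp

lemma th_natural_smul: "f \<in> arr X \<Longrightarrow> th_natural f \<Longrightarrow> th_natural (smul X r f)"
  unfolding theta_natural_def using D_linear_cmp_smul[OF _ th_D_linear] by simp

lemma th_natural_pls:
  "f \<in> arr X \<Longrightarrow> g \<in> arr X \<Longrightarrow> dm X g = dm X f \<Longrightarrow> cd X g = cd X f \<Longrightarrow>
   th_natural f \<Longrightarrow> th_natural g \<Longrightarrow> th_natural (pls X f g)"
  unfolding theta_natural_def using D_linear_cmp_pls[OF _ th_D_linear] by simp

lemma th_natural_zr: "A \<in> obj X \<Longrightarrow> B \<in> obj X \<Longrightarrow> th_natural (zr X A B)"
  unfolding theta_natural_def using D_linear_cmp_zr[OF _ th_D_linear] by simp

lemma th_natural_bng: "A \<in> obj X \<Longrightarrow> th_natural (bng X A)"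
  unfolding theta_natural_def by (rule arr_to_S_trm_unique) auto

lemma omega_th:
  "A \<in> obj X \<Longrightarrow> B \<in> obj X \<Longrightarrow>
   cmp X (omega A B) (th (prd X A B)) = tup X (cmp X (th A) (p1 X A B)) (cmp X (th B) (p2 X A B))"
  using omega_cmp[of A B "th (prd X A B)"] p1_th_natural[of A B] p2_th_natural[of A B]
  unfolding theta_natural_def by simp

lemma th_natural_tup:
  assumes "f \<in> arr X" "g \<in> arr X" "dm X g = dm X f" "th_natural f" "th_natural g"
  shows "th_natural (tup X f g)"
proof -
  let ?A = "dm X f" and ?B = "cd X f" and ?D = "cd X g"
  have "cmp X (omega ?B ?D) (cmp X (th (prd X ?B ?D)) (tup X f g)) = tup X (cmp X (th ?B) f) (cmp X (th ?D) g)"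
    using omega_th[of ?B ?D] cmp_assoc[of "tup X f g" "th (prd X ?B ?D)" "omega ?B ?D"] assms by simp
  also have "\<dots> = tup X (cmp X (Sa f) (th ?A)) (cmp X (Sa g) (th ?A))"
    using assms unfolding theta_natural_def by simp
  also have "\<dots> = cmp X (omega ?B ?D) (cmp X (Sa (tup X f g)) (th ?A))"
    using omega_Sa_tup[OF assms(1-3)] cmp_assoc[of "th ?A" "Sa (tup X f g)" "omega ?B ?D"] assms by simp
  finally have "cmp X (th (prd X ?B ?D)) (tup X f g) = cmp X (Sa (tup X f g)) (th ?A)"
    by (rule omega_cmp_cancel[rotated -1]) (use assms in simp_all)
  then show ?thesis
    unfolding theta_natural_def using assms by simp
qed

lemma Dif_th_cmp: "f \<in> arr X \<Longrightarrow> B = cd X f \<Longrightarrow> Dif X (cmp X (th B) f) = cmp X (th B) (Dif X f)"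
  using Dif_cmp[of f "th B" "dm X f"] by (simp add: Dif_th)

lemma Dif_Sa_th:
  assumes "f \<in> arr X" "A = dm X f"
  shows "Dif X (cmp X (Sa f) (th A)) = cmp X (Sa (Dif X f)) (th (prd X A A))"
proof -
  have A: "A \<in> obj X"
    using assms by simp
  have "Dif X (cmp X (Sa f) (th A)) = cmp X (Dif X (Sa f)) (tup X (cmp X (th A) (p1 X A A)) (Dif X (th A)))"
    by (rule Dif_cmp) (use assms in auto)
  also have "\<dots> = cmp X (cmp X (Sa (Dif X f)) (omega_inv A A)) (cmp X (omega A A) (th (prd X A A)))"
    using assms(1) assms(2)[symmetric] A by (simp add: Dif_th Dif_Sa omega_th[OF A A] del: cmp_assoc tup_cmp)
  also have "\<dots> = cmp X (Sa (Dif X f)) (th (prd X A A))"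
    using assms A by simp
  finally show ?thesis .
qed

lemma th_natural_Dif: "f \<in> arr X \<Longrightarrow> th_natural f \<Longrightarrow> th_natural (Dif X f)"
  unfolding theta_natural_def using Dif_th_cmp[of f "cd X f"] Dif_Sa_th[of f "dm X f"] by simp

lemma th_natural_inv_arr:
  assumes iso: "is_iso X f A B" and nat: "th_natural f"
  shows "th_natural (inv_arr X f A B)"
proof -
  let ?g = "inv_arr X f A B"
  have g: "?g \<in> arr X" "dm X ?g = B" "cd X ?g = A" "cmp X ?g f = ident X A" "cmp X f ?g = ident X B"
    using inv_arr_iso[OF iso] unfolding hom_def by auto
  have f: "f \<in> arr X" "dm X f = A" "cd X f = B" "A \<in> obj X" "B \<in> obj X"
    using iso unfolding is_iso_def hom_def by auto
  have "cmp X (Sa ?g) (Sa f) = ident X (So A)"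
    using Sa_cmp_eq[OF f(1) g(1) _ g(4)] f g by simp
  then have Sg_Sf: "cmp X (Sa ?g) (cmp X (Sa f) x) = x" if "x \<in> arr X" "cd X x = So A" for x
    using cmp_assoc[of x "Sa f" "Sa ?g"] g f that by simp
  have "cmp X (th A) ?g = cmp X (Sa ?g) (cmp X (Sa f) (cmp X (th A) ?g))"
    using Sg_Sf g f by simp
  also have "\<dots> = cmp X (Sa ?g) (cmp X (th B) (cmp X f ?g))"
    using th_natural_cmp_extend[OF nat f(1), of ?g] f g by simp
  also have "\<dots> = cmp X (Sa ?g) (th B)"
    using g f by simp
  finally show ?thesis
    unfolding theta_natural_def using g by simp
qed

lemma theta_nat_cart_diff_cat: "cart_diff_cat (theta_nat X Sa th)"
  unfolding theta_nat_def
  by (rule cart_diff_cat_subcategory)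
    (auto intro: th_natural_ident th_natural_cmp th_natural_zr th_natural_smul th_natural_pls
      th_natural_bng p1_th_natural p2_th_natural th_natural_tup th_natural_Dif)

subsection \<open>The monad on theta-natural maps\<close>

abbreviation X_th :: "('o,'a,'k,'m) cdc_scheme" where
  "X_th \<equiv> theta_nat X Sa th"

lemma theta_nat_simps[simp]:
  "obj X_th = obj X" "dm X_th = dm X" "cd X_th = cd X" "ident X_th = ident X" "cmp X_th = cmp X"
  "smul X_th = smul X" "pls X_th = pls X" "zr X_th = zr X" "trm X_th = trm X" "bng X_th = bng X"
  "prd X_th = prd X" "p1 X_th = p1 X" "p2 X_th = p2 X" "tup X_th = tup X" "Dif X_th = Dif X"
  "arr X_th = {f \<in> arr X. th_natural f}"
  unfolding theta_nat_def by simp_all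

lemma hom_theta_nat: "hom X_th A B = {f \<in> hom X A B. th_natural f}"
  unfolding hom_def by auto

interpretation theta_nat: cartesian_differential_category X_th
  by unfold_locales (rule theta_nat_cart_diff_cat)

lemma theta_nat_iso:
  assumes iso: "is_iso X f A B" and nat: "th_natural f"
  shows "is_iso X_th f A B" "inv_arr X_th f A B = inv_arr X f A B"
proof -
  let ?g = "inv_arr X f A B"
  have "f \<in> hom X_th A B" "?g \<in> hom X_th B A" "cmp X_th ?g f = ident X_th A" "cmp X_th f ?g = ident X_th B"
    using inv_arr_iso[OF iso] th_natural_inv_arr[OF iso nat] nat iso
    unfolding hom_theta_nat is_iso_def by auto
  then show "is_iso X_th f A B" "inv_arr X_th f A B = ?g"
    by (rule theta_nat.inv_arr_eqI)+
qed

lemma omega_th_natural: "A \<in> obj X \<Longrightarrow> B \<in> obj X \<Longrightarrow> th_natural (omega A B)"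
  unfolding omegaF_def by (rule th_natural_tup) (auto intro: th_natural_Sa)

lemma omega_inv_theta_nat:
  "A \<in> obj X \<Longrightarrow> B \<in> obj X \<Longrightarrow>
   inv_arr X_th (omegaF X_th X_th Sa A B) (So (prd X A B)) (prd X (So A) (So B)) = omega_inv A B"
  using theta_nat_iso(2)[OF omega_iso omega_th_natural] unfolding omega_inv_def omegaF_def by simp

lemma theta_nat_S_functor: "is_functor X_th X_th So Sa"
  unfolding is_functor_def hom_theta_nat
  by (auto simp: theta_nat.category hom_def th_natural_Sa)

lemma theta_nat_monad: "monad X_th So Sa (\<lambda>A. Sa (eps A)) th"
  unfolding monad_def hom_theta_nat
proof (intro conjI allI impI ballI theta_nat_S_functor)
  fix A assume A: "A \<in> obj X_th"
  then show "th A \<in> {f \<in> hom X A (So A). th_natural f}"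
    and "Sa (eps A) \<in> {f \<in> hom X (So (So A)) (So A). th_natural f}"
    by (auto simp: hom_def th_natural_th th_natural_Sa)
  show "cmp X_th (Sa (eps A)) (Sa (Sa (eps A))) = cmp X_th (Sa (eps A)) (Sa (eps (So A)))"
    using A delta_natural[of "eps A"] by simp
  show "cmp X_th (Sa (eps A)) (th (So A)) = ident X_th (So A)"
    and "cmp X_th (Sa (eps A)) (Sa (th A)) = ident X_th (So A)"
    using A Sa_eps_th_S by simp_all
next
  fix A B f assume "f \<in> {f \<in> hom X A B. th_natural f}"
  then have f: "f \<in> arr X" "dm X f = A" "cd X f = B" "th_natural f" "A \<in> obj X" "B \<in> obj X"
    by (auto simp: hom_def dest: dm_in_obj cd_in_obj)
  then show "cmp X_th (th B) f = cmp X_th (Sa f) (th A)"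
    unfolding theta_natural_def by simp
  show "cmp X_th (Sa (eps B)) (Sa (Sa f)) = cmp X_th (Sa f) (Sa (eps A))"
    using f delta_natural[of f] by simp
qed

lemma theta_nat_S_strong_diff: "strong_cart_diff_functor X_th X_th So Sa"
  unfolding strong_cart_diff_functor_def strong_cart_klinear_functor_def
proof (intro conjI allI impI ballI theta_nat_S_functor)
  show "is_iso X_th (bng X_th (So (trm X_th))) (So (trm X_th)) (trm X_th)"
    using theta_nat_iso(1)[OF bng_S_trm_iso th_natural_bng] by simp
  fix A B assume "A \<in> obj X_th" "B \<in> obj X_th"
  then show "is_iso X_th (omegaF X_th X_th Sa A B) (So (prd X_th A B)) (prd X_th (So A) (So B))"
    using theta_nat_iso(1)[OF omega_iso omega_th_natural] unfolding omegaF_def by simp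
next
  fix A B f g r s assume "f \<in> hom X_th A B" "g \<in> hom X_th A B"
  then show "Sa (pls X_th (smul X_th r f) (smul X_th s g)) = pls X_th (smul X_th r (Sa f)) (smul X_th s (Sa g))"
    using Sa_linear_comb unfolding hom_theta_nat hom_def by auto
next
  fix A B f assume "f \<in> hom X_th A B"
  then show "Dif X_th (Sa f) = cmp X_th (Sa (Dif X_th f))
      (inv_arr X_th (omegaF X_th X_th Sa A A) (So (prd X_th A A)) (prd X_th (So A) (So A)))"
    using Dif_Sa omega_inv_theta_nat unfolding hom_theta_nat hom_def by auto
qed

lemma theta_nat_cart_diff_monad: "cart_diff_monad X_th So Sa (\<lambda>A. Sa (eps A)) th"
  unfolding cart_diff_monad_def D_linear_def
  using theta_nat_cart_diff_cat theta_nat_monad theta_nat_S_strong_diff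
    th_D_linear Sa_eps_D_linear unfolding D_linear_def by simp

subsection \<open>The Kleisli category\<close>

abbreviation KL :: "('o, 'o \<times> 'o \<times> 'a, 'k) cdc" where
  "KL \<equiv> kl_cat X So Sa eps th"

abbreviation G :: "'a \<Rightarrow> 'o \<times> 'o \<times> 'a" where
  "G \<equiv> G_theta X Sa th"

abbreviation G_inv :: "'o \<times> 'o \<times> 'a \<Rightarrow> 'a" where
  "G_inv \<equiv> G_theta_inv X eps"

definition S_trm_inv :: 'a where
  "S_trm_inv = inv_arr X (bng X (So (trm X))) (So (trm X)) (trm X)"

lemma S_trm_inv_typing[simp]: "S_trm_inv \<in> arr X" "dm X S_trm_inv = trm X" "cd X S_trm_inv = So (trm X)"
  using inv_arr_iso(1)[OF bng_S_trm_iso] unfolding S_trm_inv_def hom_def by auto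

lemma kl_cat_simps[simp]:
  "obj KL = obj X" "trm KL = trm X" "prd KL = prd X"
  "arr KL = {(A, B, f) | A B f. B \<in> obj X \<and> f \<in> hom X_th A (So B)}"
  "dm KL (A, B, f) = A" "cd KL (A, B, f) = B" "ident KL A = (A, A, th A)"
  "cmp KL (B', D, g) (A, B, f) = (A, D, cmp X (Sa (eps D)) (cmp X (Sa g) f))"
  "smul KL r (A, B, f) = (A, B, smul X r f)"
  "pls KL (A, B, f) (A', B', g) = (A, B, pls X f g)"
  "zr KL A B = (A, B, zr X A (So B))"
  "bng KL A = (A, trm X, cmp X S_trm_inv (bng X A))"
  "p1 KL A B = (prd X A B, A, cmp X (th A) (p1 X A B))"
  "p2 KL A B = (prd X A B, B, cmp X (th B) (p2 X A B))"
  "A \<in> obj X \<Longrightarrow> B \<in> obj X \<Longrightarrow> tup KL (D, A, f) (D', B, g) = (D, prd X A B, cmp X (omega_inv A B) (tup X f g))"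
  "Dif KL (A, B, f) = (prd X A A, B, Dif X f)"
  using theta_nat_iso(2)[OF bng_S_trm_iso th_natural_bng] omega_inv_theta_nat
  unfolding kl_cat_def Let_def S_trm_inv_def omegaF_def by simp_all

lemma G_theta_eq: "G f = (dm X f, cd X f, cmp X (Sa f) (th (dm X f)))"
  unfolding G_theta_def by simp

lemma G_theta_inv_eq[simp]: "G_inv (A, B, f) = cmp X (eps B) f"
  unfolding G_theta_inv_def by simp

lemma G_theta_inv_G_theta[simp]: "f \<in> arr X \<Longrightarrow> G_inv (G f) = f"
  unfolding G_theta_eq using eps_natural_cmp[of f "th (dm X f)"] by simp

lemma G_theta_G_theta_inv:
  assumes "B \<in> obj X" "f \<in> hom X_th A (So B)"
  shows "G (G_inv (A, B, f)) = (A, B, f)"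
proof -
  have f: "f \<in> arr X" "dm X f = A" "cd X f = So B" "th_natural f" "A \<in> obj X"
    using assms unfolding hom_theta_nat hom_def by auto
  have "cmp X (Sa (cmp X (eps B) f)) (th A) = cmp X (Sa (eps B)) (cmp X (Sa f) (th A))"
    using f assms by simp
  also have "\<dots> = cmp X (Sa (eps B)) (cmp X (th (So B)) f)"
    using f unfolding theta_natural_def by simp
  also have "\<dots> = f"
    using cmp_assoc[of f "th (So B)" "Sa (eps B)"] Sa_eps_th_S[OF assms(1)] f assms by simp
  finally show ?thesis
    unfolding G_theta_eq using f assms by simp
qed

lemma G_arr: "f \<in> arr X \<Longrightarrow> G f \<in> arr KL"
  unfolding G_theta_eq
  by (auto simp: hom_theta_nat hom_def intro!: th_natural_cmp th_natural_th th_natural_Sa)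

lemma arr_kl_cat: "arr KL = G ` arr X"
proof
  show "G ` arr X \<subseteq> arr KL"
    using G_arr by auto
  show "arr KL \<subseteq> G ` arr X"
  proof
    fix x assume "x \<in> arr KL"
    then obtain A B f where x: "x = (A, B, f)" "B \<in> obj X" "f \<in> hom X_th A (So B)"
      by auto
    then have "G_inv (A, B, f) \<in> arr X"
      unfolding hom_theta_nat hom_def by auto
    then show "x \<in> G ` arr X"
      using G_theta_G_theta_inv[OF x(2,3)] x(1) by (metis image_eqI)
  qed
qed

lemma G_dm[simp]: "dm KL (G f) = dm X f"
  and G_cd[simp]: "cd KL (G f) = cd X f"
  unfolding G_theta_eq by simp_all

lemma G_inj: "inj_on G (arr X)"
  by (rule inj_on_inverseI[of _ G_inv]) simp

lemma G_ident: "A \<in> obj X \<Longrightarrow> ident KL A = G (ident X A)"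
  unfolding G_theta_eq by simp

lemma G_cmp: "f \<in> arr X \<Longrightarrow> g \<in> arr X \<Longrightarrow> dm X g = cd X f \<Longrightarrow> cmp KL (G g) (G f) = G (cmp X g f)"
  unfolding G_theta_eq using delta_natural_cmp by simp

lemma G_smul: "f \<in> arr X \<Longrightarrow> smul KL r (G f) = G (smul X r f)"
  and G_pls: "f \<in> arr X \<Longrightarrow> g \<in> arr X \<Longrightarrow> dm X g = dm X f \<Longrightarrow> cd X g = cd X f \<Longrightarrow>
    pls KL (G f) (G g) = G (pls X f g)"
  and G_zr: "A \<in> obj X \<Longrightarrow> B \<in> obj X \<Longrightarrow> zr KL A B = G (zr X A B)"
  unfolding G_theta_eq by simp_all

lemma G_bng: "A \<in> obj X \<Longrightarrow> bng KL A = G (bng X A)"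
  unfolding G_theta_eq by (simp, rule arr_to_S_trm_unique) auto

lemma G_p1: "A \<in> obj X \<Longrightarrow> B \<in> obj X \<Longrightarrow> p1 KL A B = G (p1 X A B)"
  and G_p2: "A \<in> obj X \<Longrightarrow> B \<in> obj X \<Longrightarrow> p2 KL A B = G (p2 X A B)"
  unfolding G_theta_eq using p1_th_natural p2_th_natural unfolding theta_natural_def by simp_all

lemma G_tup:
  assumes "f \<in> arr X" "g \<in> arr X" "dm X g = dm X f"
  shows "tup KL (G f) (G g) = G (tup X f g)"
proof -
  have "tup X (cmp X (Sa f) (th (dm X f))) (cmp X (Sa g) (th (dm X f)))
      = cmp X (omega (cd X f) (cd X g)) (cmp X (Sa (tup X f g)) (th (dm X f)))"
    using omega_Sa_tup[OF assms] cmp_assoc[of "th (dm X f)" "Sa (tup X f g)" "omega (cd X f) (cd X g)"]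
      assms by simp
  then show ?thesis
    unfolding G_theta_eq using assms by simp
qed

lemma G_Dif: "f \<in> arr X \<Longrightarrow> Dif KL (G f) = G (Dif X f)"
  unfolding G_theta_eq using Dif_Sa_th by simp

interpretation KL: cart_diff_transport X KL G
  by unfold_locales
    (simp_all only: cart_diff_cat kl_cat_simps(1-3) arr_kl_cat G_inj G_dm G_cd G_ident G_cmp G_smul
      G_pls G_zr G_bng G_p1 G_p2 G_tup G_Dif)

lemma kl_cat_cart_diff_cat: "cart_diff_cat KL"
  by (rule KL.cart_diff_cat_E)

lemma G_theta_strict: "strict_cart_diff_functor X KL (\<lambda>A. A) G"
  by (rule KL.strict_cart_diff_functor_F)

lemma G_theta_inv_strict: "strict_cart_diff_functor KL X (\<lambda>A. A) G_inv"
  by (rule KL.strict_cart_diff_functor_inverse) simp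

lemma G_theta_G_theta_inv_arr:
  assumes "f \<in> arr KL"
  shows "G (G_inv f) = f"
proof -
  obtain f0 where "f = G f0" "f0 \<in> arr X"
    using assms unfolding arr_kl_cat by blast
  then show ?thesis
    by simp
qed

end

theorem mainTheorem6:
  fixes X :: "('o, 'a, 'k::comm_semiring_1) cdc"
    and So :: "'o \<Rightarrow> 'o" and Sa :: "'a \<Rightarrow> 'a"
    and eps :: "'o \<Rightarrow> 'a" and th :: "'o \<Rightarrow> 'a"
  assumes "cart_diff_abstract_kleisli X So Sa eps th"
  shows "cart_diff_cat (theta_nat X Sa th)
       \<and> cart_diff_monad (theta_nat X Sa th) So Sa (\<lambda>A. Sa (eps A)) th
       \<and> cart_diff_cat (kl_cat X So Sa eps th)
       \<and> strict_cart_diff_functor X (kl_cat X So Sa eps th) (\<lambda>A. A) (G_theta X Sa th)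
       \<and> strict_cart_diff_functor (kl_cat X So Sa eps th) X (\<lambda>A. A) (G_theta_inv X eps)
       \<and> (\<forall>f \<in> arr X. G_theta_inv X eps (G_theta X Sa th f) = f)
       \<and> (\<forall>f \<in> arr (kl_cat X So Sa eps th). G_theta X Sa th (G_theta_inv X eps f) = f)"
proof -
  interpret cartesian_differential_abstract_kleisli X So Sa eps th
    by unfold_locales (rule assms)
  show ?thesis
    using theta_nat_cart_diff_cat theta_nat_cart_diff_monad kl_cat_cart_diff_cat G_theta_strict
      G_theta_inv_strict G_theta_G_theta_inv_arr by simp
qed

end
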